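(* Let $p$ be a prime and $X$ a countably infinite set. Then the ring $\mathcal{B}_{(1)}(\mathbb{Q}_p(X))$ is an infinite sum ring. In particular, $K_0(\mathcal{B}_{(1)}(\mathbb{Q}_p(X)))=0$.
   Context: $\mathbb{Q}_p(X)$ is the set of maps $\xi:X\to\mathbb{Q}_p$ with $|\xi(i)|_p\le1$ for all but finitely many $i$, a $\mathbb{Z}_p$-module under coordinatewise operations, with the topology $\tau$ in which $A\subseteq\mathbb{Q}_p(X)$ is open iff for every finite $P\subseteq X$ the set $A\cap\big(\prod_{i\in P}\mathbb{Q}_p\times\prod_{j\in X\setminus P}\mathbb{Z}_p\big)$ is open in the product topology. $\mathcal{B}(\mathbb{Q}_p(X))$ is the ring of $\tau$-continuous $\mathbb{Z}_p$-linear maps, normed by $\|T\|=\sup_{\|\xi\|\le1}\|T\xi\|$ with $\|\xi\|=\max_i|\xi(i)|_p$, and $\mathcal{B}_{(1)}(\mathbb{Q}_p(X))$ is the subring of operators of norm at most $1$. A sum ring is a unital ring $R$ with elements $a_0,b_0,a_1,b_1$ such that $a_0b_0=a_1b_1=1$ and $b_0a_0+b_1a_1=1$; then $x\boxplus y:=b_0xa_0+b_1ya_1$ defines a unital ring homomorphism $R\times R\to R$. An infinite sum ring is a sum ring with a unital ring homomorphism $R\to R$, $a\mapsto a^\infty$, such that $a\boxplus a^\infty=a^\infty$ for all $a\in R$. *)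

theory Defs
  imports "HOL-Analysis.Analysis" "HOL-Algebra.Ring" "HOL-Algebra.RingHom"
    "HOL-Computational_Algebra.Factorial_Ring"
begin

definition padic_abs_rat :: "nat \<Rightarrow> rat \<Rightarrow> real" where
  "padic_abs_rat p q =
     (if q = 0 then 0
      else (case quotient_of q of (a, b) \<Rightarrow>
              real p powr (real (multiplicity (int p) b) - real (multiplicity (int p) a))))"

definition padic_cauchy :: "nat \<Rightarrow> (nat \<Rightarrow> rat) \<Rightarrow> bool" where
  "padic_cauchy p f \<longleftrightarrow>
     (\<forall>e>0. \<exists>N. \<forall>m\<ge>N. \<forall>n\<ge>N. padic_abs_rat p (f m - f n) < e)"

definition padic_equiv :: "nat \<Rightarrow> ((nat \<Rightarrow> rat) \<times> (nat \<Rightarrow> rat)) set" where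
  "padic_equiv p = {(f, g). padic_cauchy p f \<and> padic_cauchy p g \<and>
                      (\<lambda>n. padic_abs_rat p (f n - g n)) \<longlonglongrightarrow> 0}"

type_synonym qp = "(nat \<Rightarrow> rat) set"

definition Qp :: "nat \<Rightarrow> qp set" where
  "Qp p = {f. padic_cauchy p f} // padic_equiv p"

definition qp_of :: "nat \<Rightarrow> (nat \<Rightarrow> rat) \<Rightarrow> qp" where
  "qp_of p f = padic_equiv p `` {f}"

definition qp_rep :: "qp \<Rightarrow> (nat \<Rightarrow> rat)" where
  "qp_rep A = (SOME f. f \<in> A)"

definition qp_add :: "nat \<Rightarrow> qp \<Rightarrow> qp \<Rightarrow> qp" where
  "qp_add p A B = qp_of p (\<lambda>n. qp_rep A n + qp_rep B n)"

definition qp_mult :: "nat \<Rightarrow> qp \<Rightarrow> qp \<Rightarrow> qp" where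
  "qp_mult p A B = qp_of p (\<lambda>n. qp_rep A n * qp_rep B n)"

definition qp_neg :: "nat \<Rightarrow> qp \<Rightarrow> qp" where
  "qp_neg p A = qp_of p (\<lambda>n. - qp_rep A n)"

definition qp_zero :: "nat \<Rightarrow> qp" where
  "qp_zero p = qp_of p (\<lambda>n. 0)"

definition qp_abs :: "nat \<Rightarrow> qp \<Rightarrow> real" where
  "qp_abs p A = lim (\<lambda>n. padic_abs_rat p (qp_rep A n))"

definition Zp :: "nat \<Rightarrow> qp set" where
  "Zp p = {A \<in> Qp p. qp_abs p A \<le> 1}"

definition Qp_top :: "nat \<Rightarrow> qp topology" where
  "Qp_top p = topology (\<lambda>U. U \<subseteq> Qp p \<and>
      (\<forall>x\<in>U. \<exists>e>0. \<forall>y\<in>Qp p. qp_abs p (qp_add p y (qp_neg p x)) < e \<longrightarrow> y \<in> U))"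

definition QpX :: "nat \<Rightarrow> ('x \<Rightarrow> qp) set" where
  "QpX p = {\<xi>. (\<forall>i. \<xi> i \<in> Qp p) \<and> finite {i. qp_abs p (\<xi> i) > 1}}"

definition vadd :: "nat \<Rightarrow> ('x \<Rightarrow> qp) \<Rightarrow> ('x \<Rightarrow> qp) \<Rightarrow> ('x \<Rightarrow> qp)" where
  "vadd p \<xi> \<eta> = (\<lambda>i. qp_add p (\<xi> i) (\<eta> i))"

definition vsmult :: "nat \<Rightarrow> qp \<Rightarrow> ('x \<Rightarrow> qp) \<Rightarrow> ('x \<Rightarrow> qp)" where
  "vsmult p a \<xi> = (\<lambda>i. qp_mult p a (\<xi> i))"

definition vzero :: "nat \<Rightarrow> ('x \<Rightarrow> qp)" where
  "vzero p = (\<lambda>i. qp_zero p)"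

definition EP :: "nat \<Rightarrow> 'x set \<Rightarrow> ('x \<Rightarrow> qp) set" where
  "EP p P = {\<xi>. (\<forall>i\<in>P. \<xi> i \<in> Qp p) \<and> (\<forall>j. j \<notin> P \<longrightarrow> \<xi> j \<in> Zp p)}"

definition tau :: "nat \<Rightarrow> ('x \<Rightarrow> qp) topology" where
  "tau p = topology (\<lambda>A. A \<subseteq> QpX p \<and>
      (\<forall>P. finite P \<longrightarrow>
         openin (subtopology (product_topology (\<lambda>i. Qp_top p) UNIV) (EP p P)) (A \<inter> EP p P)))"

definition vnorm :: "nat \<Rightarrow> ('x \<Rightarrow> qp) \<Rightarrow> real" where
  "vnorm p \<xi> = (SUP i. qp_abs p (\<xi> i))"

definition Bop :: "nat \<Rightarrow> (('x \<Rightarrow> qp) \<Rightarrow> ('x \<Rightarrow> qp)) set" where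
  "Bop p = {T. T \<in> extensional (QpX p) \<and> continuous_map (tau p) (tau p) T \<and>
              (\<forall>\<xi>\<in>QpX p. \<forall>\<eta>\<in>QpX p. T (vadd p \<xi> \<eta>) = vadd p (T \<xi>) (T \<eta>)) \<and>
              (\<forall>a\<in>Zp p. \<forall>\<xi>\<in>QpX p. T (vsmult p a \<xi>) = vsmult p a (T \<xi>))}"

definition Bop1 :: "nat \<Rightarrow> (('x \<Rightarrow> qp) \<Rightarrow> ('x \<Rightarrow> qp)) set" where
  "Bop1 p = {T \<in> Bop p. \<forall>\<xi>\<in>QpX p. vnorm p \<xi> \<le> 1 \<longrightarrow> vnorm p (T \<xi>) \<le> 1}"

definition Bop1_ring :: "nat \<Rightarrow> (('x \<Rightarrow> qp) \<Rightarrow> ('x \<Rightarrow> qp)) ring" where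
  "Bop1_ring p =
     \<lparr> carrier = Bop1 p,
       monoid.mult = (\<lambda>S T. restrict (S \<circ> T) (QpX p)),
       one = restrict id (QpX p),
       zero = restrict (\<lambda>\<xi>. vzero p) (QpX p),
       add = (\<lambda>S T. restrict (\<lambda>\<xi>. vadd p (S \<xi>) (T \<xi>)) (QpX p)) \<rparr>"

definition sum_ring_data :: "('a, 'b) ring_scheme \<Rightarrow> 'a \<Rightarrow> 'a \<Rightarrow> 'a \<Rightarrow> 'a \<Rightarrow> bool" where
  "sum_ring_data R a0 b0 a1 b1 \<longleftrightarrow>
     a0 \<in> carrier R \<and> b0 \<in> carrier R \<and> a1 \<in> carrier R \<and> b1 \<in> carrier R \<and>
     a0 \<otimes>\<^bsub>R\<^esub> b0 = \<one>\<^bsub>R\<^esub> \<and> a1 \<otimes>\<^bsub>R\<^esub> b1 = \<one>\<^bsub>R\<^esub> \<and>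
     (b0 \<otimes>\<^bsub>R\<^esub> a0) \<oplus>\<^bsub>R\<^esub> (b1 \<otimes>\<^bsub>R\<^esub> a1) = \<one>\<^bsub>R\<^esub>"

definition sum_ring :: "('a, 'b) ring_scheme \<Rightarrow> bool" where
  "sum_ring R \<longleftrightarrow> ring R \<and> (\<exists>a0 b0 a1 b1. sum_ring_data R a0 b0 a1 b1)"

definition boxplus :: "('a, 'b) ring_scheme \<Rightarrow> 'a \<Rightarrow> 'a \<Rightarrow> 'a \<Rightarrow> 'a \<Rightarrow> 'a \<Rightarrow> 'a \<Rightarrow> 'a" where
  "boxplus R a0 b0 a1 b1 x y =
     (b0 \<otimes>\<^bsub>R\<^esub> x \<otimes>\<^bsub>R\<^esub> a0) \<oplus>\<^bsub>R\<^esub> (b1 \<otimes>\<^bsub>R\<^esub> y \<otimes>\<^bsub>R\<^esub> a1)"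

definition infinite_sum_ring :: "('a, 'b) ring_scheme \<Rightarrow> bool" where
  "infinite_sum_ring R \<longleftrightarrow> ring R \<and>
     (\<exists>a0 b0 a1 b1 \<phi>. sum_ring_data R a0 b0 a1 b1 \<and> \<phi> \<in> ring_hom R R \<and>
        (\<forall>a\<in>carrier R. boxplus R a0 b0 a1 b1 a (\<phi> a) = \<phi> a))"

text \<open>Matrices over \<open>R\<close> are functions \<open>nat \<Rightarrow> nat \<Rightarrow> 'a\<close>; only indices below the size matter.\<close>
definition mat_carrier :: "('a, 'b) ring_scheme \<Rightarrow> nat \<Rightarrow> nat \<Rightarrow> (nat \<Rightarrow> nat \<Rightarrow> 'a) set" where
  "mat_carrier R n m = {A. \<forall>i<n. \<forall>j<m. A i j \<in> carrier R}"

definition mat_eq :: "nat \<Rightarrow> nat \<Rightarrow> (nat \<Rightarrow> nat \<Rightarrow> 'a) \<Rightarrow> (nat \<Rightarrow> nat \<Rightarrow> 'a) \<Rightarrow> bool" where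
  "mat_eq n m A B \<longleftrightarrow> (\<forall>i<n. \<forall>j<m. A i j = B i j)"

definition mat_mult :: "('a, 'b) ring_scheme \<Rightarrow> nat \<Rightarrow> (nat \<Rightarrow> nat \<Rightarrow> 'a) \<Rightarrow> (nat \<Rightarrow> nat \<Rightarrow> 'a) \<Rightarrow> (nat \<Rightarrow> nat \<Rightarrow> 'a)" where
  "mat_mult R k A B = (\<lambda>i j. finsum R (\<lambda>l. A i l \<otimes>\<^bsub>R\<^esub> B l j) {..<k})"

definition idempotent_mat :: "('a, 'b) ring_scheme \<Rightarrow> nat \<Rightarrow> (nat \<Rightarrow> nat \<Rightarrow> 'a) \<Rightarrow> bool" where
  "idempotent_mat R n e \<longleftrightarrow> e \<in> mat_carrier R n n \<and> mat_eq n n (mat_mult R n e e) e"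

text \<open>Murray--von Neumann equivalence of an \<open>n\<times>n\<close> idempotent \<open>e\<close> and an \<open>m\<times>m\<close> idempotent \<open>f\<close>
  (equivalently, \<open>eR\<^sup>n \<cong> fR\<^sup>m\<close> as projective modules).\<close>
definition mvn_equiv :: "('a, 'b) ring_scheme \<Rightarrow> nat \<Rightarrow> nat \<Rightarrow> (nat \<Rightarrow> nat \<Rightarrow> 'a) \<Rightarrow> (nat \<Rightarrow> nat \<Rightarrow> 'a) \<Rightarrow> bool" where
  "mvn_equiv R n m e f \<longleftrightarrow>
     (\<exists>x y. x \<in> mat_carrier R n m \<and> y \<in> mat_carrier R m n \<and>
            mat_eq n n (mat_mult R m x y) e \<and> mat_eq m m (mat_mult R n y x) f)"

definition identity_mat :: "('a, 'b) ring_scheme \<Rightarrow> nat \<Rightarrow> nat \<Rightarrow> 'a" where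
  "identity_mat R = (\<lambda>i j. if i = j then \<one>\<^bsub>R\<^esub> else \<zero>\<^bsub>R\<^esub>)"

definition dsum_one :: "('a, 'b) ring_scheme \<Rightarrow> nat \<Rightarrow> (nat \<Rightarrow> nat \<Rightarrow> 'a) \<Rightarrow> nat \<Rightarrow> nat \<Rightarrow> 'a" where
  "dsum_one R n e = (\<lambda>i j. if i < n \<and> j < n then e i j
                          else if n \<le> i \<and> n \<le> j \<and> i = j then \<one>\<^bsub>R\<^esub> else \<zero>\<^bsub>R\<^esub>)"

text \<open>\<open>K\<^sub>0(R) = 0\<close>: every class \<open>[e]\<close> of an idempotent matrix vanishes, i.e.
  \<open>e \<oplus> 1\<^sub>k\<close> is equivalent to \<open>1\<^sub>k\<close> for some \<open>k\<close> (stable equivalence with \<open>0\<close>).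
  Since \<open>K\<^sub>0(R)\<close> consists of the differences \<open>[e] - [f]\<close>, this is exactly \<open>K\<^sub>0(R) = 0\<close>.\<close>
definition K0_trivial :: "('a, 'b) ring_scheme \<Rightarrow> bool" where
  "K0_trivial R \<longleftrightarrow>
     (\<forall>n e. idempotent_mat R n e \<longrightarrow>
        (\<exists>k. mvn_equiv R (n + k) k (dsum_one R n e) (identity_mat R)))"

end

theory Submission
  imports Defs
begin

text \<open>
  Since \<open>X\<close> is countably infinite we may identify it with \<open>\<nat> \<times> X\<close> and regard a vector as a
  sequence of blocks indexed by \<open>X\<close>. Reindexing along \<open>x \<mapsto> (0, x)\<close> and along the shift
  \<open>(n, x) \<mapsto> (n + 1, x)\<close> gives operators \<open>a\<^sub>0, b\<^sub>0, a\<^sub>1, b\<^sub>1\<close> making \<open>\<B>\<^sub>(\<^sub>1\<^sub>)(\<bbbQ>\<^sub>p(X))\<close> a sum ring,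
  and the operator \<open>T\<^sup>\<infinity>\<close> acting as \<open>T\<close> on every block satisfies \<open>T \<boxplus> T\<^sup>\<infinity> = T\<^sup>\<infinity>\<close>.

  The analytic content is that these operators are \<open>\<tau>\<close>-continuous. The topology \<open>\<tau>\<close> is
  coherent with the products \<open>EP P = \<Prod>\<^sub>i\<^sub>\<in>\<^sub>P \<bbbQ>\<^sub>p \<times> \<Prod>\<^sub>j\<^sub>\<notin>\<^sub>P \<int>\<^sub>p\<close>, each of which is \<open>\<tau>\<close>-open and carries
  the product topology, so it suffices that near every point of \<open>EP P\<close> an operator maps into some
  \<open>EP Q\<close> and is coordinatewise continuous there. For \<open>T\<^sup>\<infinity>\<close> this works because an operator of
  norm at most \<open>1\<close> maps \<open>\<int>\<^sub>p\<^sup>X\<close> into itself, so only the finitely many blocks meeting \<open>P\<close> matter.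

  \<open>K\<^sub>0 = 0\<close> is the Eilenberg swindle: a sum ring has matrix units identifying an idempotent
  matrix \<open>e\<close> with an idempotent element \<open>E\<close>, and \<open>F = E\<^sup>\<infinity>\<close> satisfies \<open>F = E \<boxplus> F\<close>, from which
  an explicit row and column show that \<open>e \<oplus> 1\<close> is equivalent to \<open>1\<close>.
\<close>

section \<open>The p-adic absolute value on the rationals\<close>

definition padic_val_rat :: "nat \<Rightarrow> rat \<Rightarrow> int" where
  "padic_val_rat p q = int (multiplicity (int p) (fst (quotient_of q)))
                       - int (multiplicity (int p) (snd (quotient_of q)))"

lemma padic_abs_rat_eq_powr:
  "q \<noteq> 0 \<Longrightarrow> padic_abs_rat p q = real p powr (- of_int (padic_val_rat p q))"
  unfolding padic_abs_rat_def padic_val_rat_def by (auto split: prod.splits)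

lemma padic_abs_rat_0 [simp]: "padic_abs_rat p 0 = 0"
  unfolding padic_abs_rat_def by simp

lemma padic_abs_rat_nonneg [simp]: "padic_abs_rat p q \<ge> 0"
  unfolding padic_abs_rat_def by (auto split: prod.splits)

lemma rat_eq_int_fraction:
  fixes q :: rat
  obtains a b :: int where "q = of_int a / of_int b" "b \<noteq> 0" "q \<noteq> 0 \<Longrightarrow> a \<noteq> 0"
proof -
  obtain a b where qo: "quotient_of q = (a, b)" by fastforce
  show ?thesis
    using that[of a b] quotient_of_div[OF qo] quotient_of_denom_pos[OF qo] by auto
qed

locale padic_prime =
  fixes p :: nat
  assumes prime_p: "prime p"
begin

lemma padic_val_rat_of_int_divide:
  assumes a: "a \<noteq> 0" and b: "b \<noteq> 0"
  shows "padic_val_rat p (of_int a / of_int b) = int (multiplicity (int p) a) - int (multiplicity (int p) b)"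
proof -
  have pe: "prime_elem (int p)" using prime_p by simp
  obtain a' b' where qo: "quotient_of (of_int a / of_int b) = (a', b')" by fastforce
  have b': "b' > 0" using quotient_of_denom_pos[OF qo] .
  have eq: "(of_int a / of_int b :: rat) = of_int a' / of_int b'" using quotient_of_div[OF qo] .
  have a': "a' \<noteq> 0" using eq a b b' by auto
  have "(of_int (a * b') :: rat) = of_int (a' * b)" using eq b b' by (simp add: field_simps)
  hence "multiplicity (int p) (a * b') = multiplicity (int p) (a' * b)" by (simp only: of_int_eq_iff)
  hence "multiplicity (int p) a + multiplicity (int p) b' = multiplicity (int p) a' + multiplicity (int p) b"
    using prime_elem_multiplicity_mult_distrib[OF pe] a b a' b' by (metis less_irrefl)
  thus ?thesis unfolding padic_val_rat_def qo by simp
qed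

lemma padic_val_rat_mult:
  assumes "q \<noteq> 0" "r \<noteq> 0"
  shows "padic_val_rat p (q * r) = padic_val_rat p q + padic_val_rat p r"
proof -
  have pe: "prime_elem (int p)" using prime_p by simp
  obtain a b where q: "q = of_int a / of_int b" "b \<noteq> 0" "a \<noteq> 0"
    using rat_eq_int_fraction assms(1) by metis
  obtain c d where r: "r = of_int c / of_int d" "d \<noteq> 0" "c \<noteq> 0"
    using rat_eq_int_fraction assms(2) by metis
  have "q * r = of_int (a * c) / of_int (b * d)" using q r by simp
  moreover have "padic_val_rat p (of_int (a * c) / of_int (b * d))
      = int (multiplicity (int p) (a * c)) - int (multiplicity (int p) (b * d))"
    using q r by (intro padic_val_rat_of_int_divide) auto
  ultimately show ?thesis
    using q r padic_val_rat_of_int_divide prime_elem_multiplicity_mult_distrib[OF pe] by simp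
qed

lemma multiplicity_add_ge_min:
  assumes "(x :: int) + y \<noteq> 0"
  shows "multiplicity (int p) (x + y) \<ge> min (multiplicity (int p) x) (multiplicity (int p) y)"
proof -
  let ?k = "min (multiplicity (int p) x) (multiplicity (int p) y)"
  have "int p ^ ?k dvd x" "int p ^ ?k dvd y" by (rule multiplicity_dvd'; simp)+
  hence "int p ^ ?k dvd x + y" by simp
  moreover have "\<not> is_unit (int p)" using prime_p prime_gt_1_nat by auto
  ultimately show ?thesis using multiplicity_geI assms by blast
qed

lemma padic_val_rat_add_ge_min:
  assumes "q \<noteq> 0" "r \<noteq> 0" "q + r \<noteq> 0"
  shows "padic_val_rat p (q + r) \<ge> min (padic_val_rat p q) (padic_val_rat p r)"
proof -
  have pe: "prime_elem (int p)" using prime_p by simp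
  obtain a b where q: "q = of_int a / of_int b" "b \<noteq> 0" "a \<noteq> 0"
    using rat_eq_int_fraction assms(1) by metis
  obtain c d where r: "r = of_int c / of_int d" "d \<noteq> 0" "c \<noteq> 0"
    using rat_eq_int_fraction assms(2) by metis
  have qr: "q + r = of_int (a * d + c * b) / of_int (b * d)" using q r by (simp add: field_simps)
  have ne: "a * d + c * b \<noteq> 0"
  proof
    assume "a * d + c * b = 0"
    hence "(of_int (a * d + c * b) :: rat) = 0" by (simp only: of_int_0)
    thus False using qr assms(3) by simp
  qed
  have "padic_val_rat p (q + r)
      = int (multiplicity (int p) (a * d + c * b)) - int (multiplicity (int p) (b * d))"
    unfolding qr using ne q r by (intro padic_val_rat_of_int_divide) auto
  thus ?thesis
    using q r padic_val_rat_of_int_divide multiplicity_add_ge_min[OF ne]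
      prime_elem_multiplicity_mult_distrib[OF pe] by auto
qed

lemma padic_abs_rat_mult: "padic_abs_rat p (q * r) = padic_abs_rat p q * padic_abs_rat p r"
  using padic_val_rat_mult[of q r] padic_abs_rat_eq_powr[of _ p]
  by (cases "q = 0 \<or> r = 0") (auto simp: powr_add[symmetric])

lemma padic_abs_rat_minus: "padic_abs_rat p (- q) = padic_abs_rat p q"
proof -
  have "padic_abs_rat p (-1) = 1"
    using padic_val_rat_of_int_divide[of "-1" 1] padic_abs_rat_eq_powr[of "-1" p]
      multiplicity_unit_right[of "-1" "int p"] prime_gt_0_nat[OF prime_p] by simp
  thus ?thesis using padic_abs_rat_mult[of "-1" q] by simp
qed

lemma padic_abs_rat_add_le_max:
  "padic_abs_rat p (q + r) \<le> max (padic_abs_rat p q) (padic_abs_rat p r)"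
proof (cases "q = 0 \<or> r = 0 \<or> q + r = 0")
  case False
  have "real p > 1" using prime_p prime_gt_1_nat by auto
  moreover have "padic_val_rat p (q + r) \<ge> min (padic_val_rat p q) (padic_val_rat p r)"
    using padic_val_rat_add_ge_min False by auto
  ultimately have "real p powr (- of_int (padic_val_rat p (q + r)))
      \<le> max (real p powr (- of_int (padic_val_rat p q))) (real p powr (- of_int (padic_val_rat p r)))"
    by (auto simp: min_def max_def split: if_splits)
  thus ?thesis using False padic_abs_rat_eq_powr by auto
qed (auto simp: le_max_iff_disj)

lemma padic_abs_rat_triangle: "padic_abs_rat p (q + r) \<le> padic_abs_rat p q + padic_abs_rat p r"
  using padic_abs_rat_add_le_max[of q r] padic_abs_rat_nonneg[of p q] padic_abs_rat_nonneg[of p r]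
  by linarith

lemma padic_abs_rat_minus_commute: "padic_abs_rat p (q - r) = padic_abs_rat p (r - q)"
  using padic_abs_rat_minus[of "q - r"] by simp

lemma padic_abs_rat_abs_diff_le: "\<bar>padic_abs_rat p q - padic_abs_rat p r\<bar> \<le> padic_abs_rat p (q - r)"
  using padic_abs_rat_triangle[of "q - r" r] padic_abs_rat_triangle[of "r - q" q]
    padic_abs_rat_minus[of "q - r"] by auto

section \<open>The completion \<open>\<bbbQ>\<^sub>p\<close>\<close>

definition padic_null :: "(nat \<Rightarrow> rat) \<Rightarrow> bool" where
  "padic_null f \<longleftrightarrow> (\<lambda>n. padic_abs_rat p (f n)) \<longlonglongrightarrow> 0"

lemma padic_null_bound:
  assumes "padic_null f" "\<And>n. padic_abs_rat p (g n) \<le> padic_abs_rat p (f n) * C"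
  shows "padic_null g"
  unfolding padic_null_def
proof (rule Lim_null_comparison)
  show "\<forall>\<^sub>F n in sequentially. norm (padic_abs_rat p (g n)) \<le> padic_abs_rat p (f n) * C"
    using assms(2) by simp
  show "(\<lambda>n. padic_abs_rat p (f n) * C) \<longlonglongrightarrow> 0"
    using assms(1) unfolding padic_null_def by (rule tendsto_mult_left_zero)
qed

lemma padic_null_add:
  assumes "padic_null f" "padic_null g"
  shows "padic_null (\<lambda>n. f n + g n)"
  unfolding padic_null_def
proof (rule Lim_null_comparison)
  show "\<forall>\<^sub>F n in sequentially.
      norm (padic_abs_rat p (f n + g n)) \<le> padic_abs_rat p (f n) + padic_abs_rat p (g n)"
    by (simp add: padic_abs_rat_triangle)
  show "(\<lambda>n. padic_abs_rat p (f n) + padic_abs_rat p (g n)) \<longlonglongrightarrow> 0"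
    using assms unfolding padic_null_def by (rule tendsto_add_zero)
qed

lemma padic_null_minus: "padic_null f \<Longrightarrow> padic_null (\<lambda>n. - f n)"
  unfolding padic_null_def by (simp add: padic_abs_rat_minus)

lemma padic_cauchy_add [simp]:
  assumes f: "padic_cauchy p f" and g: "padic_cauchy p g"
  shows "padic_cauchy p (\<lambda>n. f n + g n)"
  unfolding padic_cauchy_def
proof (intro allI impI)
  fix e :: real assume "e > 0"
  then obtain N1 N2 where
    N1: "\<And>m n. m \<ge> N1 \<Longrightarrow> n \<ge> N1 \<Longrightarrow> padic_abs_rat p (f m - f n) < e" and
    N2: "\<And>m n. m \<ge> N2 \<Longrightarrow> n \<ge> N2 \<Longrightarrow> padic_abs_rat p (g m - g n) < e"
    using f g unfolding padic_cauchy_def by meson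
  have "padic_abs_rat p (f m + g m - (f n + g n)) < e" if "m \<ge> max N1 N2" "n \<ge> max N1 N2" for m n
    using padic_abs_rat_add_le_max[of "f m - f n" "g m - g n"] N1[of m n] N2[of m n] that
    by (simp add: add_diff_add)
  thus "\<exists>N. \<forall>m\<ge>N. \<forall>n\<ge>N. padic_abs_rat p (f m + g m - (f n + g n)) < e" by blast
qed

lemma padic_cauchy_minus [simp]: "padic_cauchy p f \<Longrightarrow> padic_cauchy p (\<lambda>n. - f n)"
  using padic_abs_rat_minus[of "f _ - f _"] by (simp add: padic_cauchy_def)

lemma padic_cauchy_diff [simp]: "padic_cauchy p f \<Longrightarrow> padic_cauchy p g \<Longrightarrow> padic_cauchy p (\<lambda>n. f n - g n)"
  using padic_cauchy_add[of f "\<lambda>n. - g n"] by simp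

lemma padic_cauchy_const [simp]: "padic_cauchy p (\<lambda>n. c)"
  unfolding padic_cauchy_def by auto

lemma padic_cauchy_bounded:
  assumes f: "padic_cauchy p f"
  obtains B where "B > 0" "\<And>n. padic_abs_rat p (f n) \<le> B"
proof -
  obtain N where N: "\<And>m n. m \<ge> N \<Longrightarrow> n \<ge> N \<Longrightarrow> padic_abs_rat p (f m - f n) < 1"
    using f unfolding padic_cauchy_def by (meson zero_less_one)
  define M where "M = Max ((\<lambda>n. padic_abs_rat p (f n)) ` {..N})"
  have M: "n \<le> N \<Longrightarrow> padic_abs_rat p (f n) \<le> M" for n
    unfolding M_def by (rule Max_ge) auto
  have "padic_abs_rat p (f n) \<le> M + 1" for n
  proof (cases "n \<le> N")
    case False
    have "padic_abs_rat p (f n) \<le> padic_abs_rat p (f n - f N) + padic_abs_rat p (f N)"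
      using padic_abs_rat_triangle[of "f n - f N" "f N"] by simp
    thus ?thesis using N[of n N] M[of N] False by linarith
  qed (use M in force)
  moreover have "M + 1 > 0" using M[of N] padic_abs_rat_nonneg[of p "f N"] by linarith
  ultimately show ?thesis using that by blast
qed

lemma padic_cauchy_mult [simp]:
  assumes f: "padic_cauchy p f" and g: "padic_cauchy p g"
  shows "padic_cauchy p (\<lambda>n. f n * g n)"
  unfolding padic_cauchy_def
proof (intro allI impI)
  fix e :: real assume e: "e > 0"
  obtain Bf Bg where Bf: "Bf > 0" "\<And>n. padic_abs_rat p (f n) \<le> Bf"
    and Bg: "Bg > 0" "\<And>n. padic_abs_rat p (g n) \<le> Bg"
    using padic_cauchy_bounded f g by metis
  obtain N1 N2 where
    N1: "\<And>m n. m \<ge> N1 \<Longrightarrow> n \<ge> N1 \<Longrightarrow> padic_abs_rat p (f m - f n) < e / Bg" and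
    N2: "\<And>m n. m \<ge> N2 \<Longrightarrow> n \<ge> N2 \<Longrightarrow> padic_abs_rat p (g m - g n) < e / Bf"
    using f g e Bf Bg unfolding padic_cauchy_def by (meson divide_pos_pos)
  have "padic_abs_rat p (f m * g m - f n * g n) < e" if mn: "m \<ge> max N1 N2" "n \<ge> max N1 N2" for m n
  proof -
    have "padic_abs_rat p (f m) * padic_abs_rat p (g m - g n) \<le> Bf * padic_abs_rat p (g m - g n)"
      using Bf(2)[of m] by (simp add: mult_right_mono)
    also have "\<dots> < e" using N2[of m n] mn Bf(1) by (simp add: pos_less_divide_eq mult.commute)
    finally have 1: "padic_abs_rat p (f m * (g m - g n)) < e" by (simp add: padic_abs_rat_mult)
    have "padic_abs_rat p (f m - f n) * padic_abs_rat p (g n) \<le> padic_abs_rat p (f m - f n) * Bg"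
      using Bg(2)[of n] by (simp add: mult_left_mono)
    also have "\<dots> < e" using N1[of m n] mn Bg(1) by (simp add: pos_less_divide_eq)
    finally have 2: "padic_abs_rat p ((f m - f n) * g n) < e" by (simp add: padic_abs_rat_mult)
    have "f m * g m - f n * g n = f m * (g m - g n) + (f m - f n) * g n" by (simp add: algebra_simps)
    thus ?thesis
      using padic_abs_rat_add_le_max[of "f m * (g m - g n)" "(f m - f n) * g n"] 1 2 by simp
  qed
  thus "\<exists>N. \<forall>m\<ge>N. \<forall>n\<ge>N. padic_abs_rat p (f m * g m - f n * g n) < e" by blast
qed

lemma equiv_padic_equiv: "equiv {f. padic_cauchy p f} (padic_equiv p)"
proof (rule equivI)
  show "sym (padic_equiv p)"
    unfolding sym_def padic_equiv_def using padic_null_minus[unfolded padic_null_def]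
    by (auto simp: padic_abs_rat_minus_commute)
  show "trans (padic_equiv p)"
  proof (rule transI)
    fix f g h assume "(f, g) \<in> padic_equiv p" "(g, h) \<in> padic_equiv p"
    hence "padic_cauchy p f" "padic_cauchy p h"
      "padic_null (\<lambda>n. f n - g n)" "padic_null (\<lambda>n. g n - h n)"
      unfolding padic_equiv_def padic_null_def by auto
    moreover have "padic_null (\<lambda>n. (f n - g n) + (g n - h n))"
      using padic_null_add calculation(3,4) .
    ultimately show "(f, h) \<in> padic_equiv p" unfolding padic_equiv_def padic_null_def by simp
  qed
qed (auto simp: refl_on_def padic_equiv_def)

lemma padic_equiv_iff:
  "(f, g) \<in> padic_equiv p \<longleftrightarrow> padic_cauchy p f \<and> padic_cauchy p g \<and> padic_null (\<lambda>n. f n - g n)"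
  unfolding padic_equiv_def padic_null_def by simp

lemma qp_of_in_Qp [simp]: "padic_cauchy p f \<Longrightarrow> qp_of p f \<in> Qp p"
  unfolding qp_of_def Qp_def by (rule quotientI) simp

lemma qp_of_eq_iff:
  "padic_cauchy p f \<Longrightarrow> padic_cauchy p g \<Longrightarrow> qp_of p f = qp_of p g \<longleftrightarrow> padic_null (\<lambda>n. f n - g n)"
  unfolding qp_of_def using eq_equiv_class_iff[OF equiv_padic_equiv] padic_equiv_iff by auto

lemma qp_rep:
  assumes "A \<in> Qp p"
  shows "padic_cauchy p (qp_rep A)" "qp_of p (qp_rep A) = A"
proof -
  from assms obtain f where A: "A = qp_of p f" "padic_cauchy p f"
    unfolding Qp_def qp_of_def by (auto elim: quotientE)
  hence "f \<in> A" using equiv_class_self[OF equiv_padic_equiv] by (auto simp: qp_of_def)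
  hence "qp_rep A \<in> A" unfolding qp_rep_def by (rule someI[of "\<lambda>f. f \<in> A"])
  hence rel: "(f, qp_rep A) \<in> padic_equiv p" using A by (simp add: qp_of_def)
  thus "padic_cauchy p (qp_rep A)" unfolding padic_equiv_iff by simp
  show "qp_of p (qp_rep A) = A"
    using equiv_class_eq[OF equiv_padic_equiv rel] A by (simp add: qp_of_def)
qed

lemma Qp_cases [consumes 1, case_names qp_of]:
  assumes "A \<in> Qp p"
  obtains f where "padic_cauchy p f" "A = qp_of p f"
  using qp_rep[OF assms] by metis

lemma qp_rep_qp_of:
  assumes "padic_cauchy p f"
  shows "padic_cauchy p (qp_rep (qp_of p f))" "padic_null (\<lambda>n. qp_rep (qp_of p f) n - f n)"
  using qp_rep[OF qp_of_in_Qp[OF assms]] qp_of_eq_iff assms by auto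

lemma qp_add_qp_of [simp]:
  assumes "padic_cauchy p f" "padic_cauchy p g"
  shows "qp_add p (qp_of p f) (qp_of p g) = qp_of p (\<lambda>n. f n + g n)"
  unfolding qp_add_def using qp_rep_qp_of[OF assms(1)] qp_rep_qp_of[OF assms(2)] assms
  by (subst qp_of_eq_iff) (auto dest: padic_null_add simp: algebra_simps)

lemma qp_neg_qp_of [simp]:
  assumes "padic_cauchy p f"
  shows "qp_neg p (qp_of p f) = qp_of p (\<lambda>n. - f n)"
  unfolding qp_neg_def using qp_rep_qp_of[OF assms] assms
  by (subst qp_of_eq_iff) (auto dest: padic_null_minus simp: algebra_simps)

lemma qp_mult_qp_of [simp]:
  assumes f: "padic_cauchy p f" and g: "padic_cauchy p g"
  shows "qp_mult p (qp_of p f) (qp_of p g) = qp_of p (\<lambda>n. f n * g n)"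
proof -
  let ?r = "qp_rep (qp_of p f)" and ?s = "qp_rep (qp_of p g)"
  have r: "padic_cauchy p ?r" "padic_null (\<lambda>n. ?r n - f n)" using qp_rep_qp_of[OF f] by auto
  have s: "padic_cauchy p ?s" "padic_null (\<lambda>n. ?s n - g n)" using qp_rep_qp_of[OF g] by auto
  obtain B where B: "\<And>n. padic_abs_rat p (?s n) \<le> B" using padic_cauchy_bounded[OF s(1)] by blast
  obtain B' where B': "\<And>n. padic_abs_rat p (f n) \<le> B'" using padic_cauchy_bounded[OF f] by blast
  have "padic_null (\<lambda>n. (?r n - f n) * ?s n)"
    by (rule padic_null_bound[OF r(2), of _ B]) (simp add: padic_abs_rat_mult B mult_left_mono)
  moreover have "padic_null (\<lambda>n. (?s n - g n) * f n)"
    by (rule padic_null_bound[OF s(2), of _ B']) (simp add: padic_abs_rat_mult B' mult_left_mono)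
  ultimately have "padic_null (\<lambda>n. (?r n - f n) * ?s n + (?s n - g n) * f n)"
    by (rule padic_null_add)
  moreover have "(?r n - f n) * ?s n + (?s n - g n) * f n = ?r n * ?s n - f n * g n" for n
    by (simp add: algebra_simps)
  ultimately have "padic_null (\<lambda>n. ?r n * ?s n - f n * g n)" by simp
  thus ?thesis unfolding qp_mult_def using r s f g by (subst qp_of_eq_iff) auto
qed

lemma qp_abs_qp_of:
  assumes f: "padic_cauchy p f"
  shows "(\<lambda>n. padic_abs_rat p (f n)) \<longlonglongrightarrow> qp_abs p (qp_of p f)"
proof -
  let ?r = "qp_rep (qp_of p f)"
  have "Cauchy (\<lambda>n. padic_abs_rat p (f n))"
  proof (rule CauchyI)
    fix e :: real assume "e > 0"
    then obtain N where "\<forall>m\<ge>N. \<forall>n\<ge>N. padic_abs_rat p (f m - f n) < e"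
      using f unfolding padic_cauchy_def by blast
    thus "\<exists>N. \<forall>m\<ge>N. \<forall>n\<ge>N. norm (padic_abs_rat p (f m) - padic_abs_rat p (f n)) < e"
      using padic_abs_rat_abs_diff_le by (metis norm_conv_dist dist_real_def le_less_trans real_norm_def)
  qed
  then obtain L where L: "(\<lambda>n. padic_abs_rat p (f n)) \<longlonglongrightarrow> L"
    using real_Cauchy_convergent convergent_def by blast
  have "(\<lambda>n. padic_abs_rat p (?r n) - padic_abs_rat p (f n)) \<longlonglongrightarrow> 0"
  proof (rule Lim_null_comparison)
    show "(\<lambda>n. padic_abs_rat p (?r n - f n)) \<longlonglongrightarrow> 0"
      using qp_rep_qp_of(2)[OF f] unfolding padic_null_def .
  qed (simp add: padic_abs_rat_abs_diff_le)
  from tendsto_add[OF this L] have "(\<lambda>n. padic_abs_rat p (?r n)) \<longlonglongrightarrow> L" by simp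
  hence "qp_abs p (qp_of p f) = L" unfolding qp_abs_def by (rule limI)
  thus ?thesis using L by simp
qed

lemma qp_zero_in_Qp [simp]: "qp_zero p \<in> Qp p"
  unfolding qp_zero_def by simp

lemma qp_add_in_Qp [simp]: "A \<in> Qp p \<Longrightarrow> B \<in> Qp p \<Longrightarrow> qp_add p A B \<in> Qp p"
  by (elim Qp_cases) simp

lemma qp_neg_in_Qp [simp]: "A \<in> Qp p \<Longrightarrow> qp_neg p A \<in> Qp p"
  by (elim Qp_cases) simp

lemma qp_mult_in_Qp [simp]: "A \<in> Qp p \<Longrightarrow> B \<in> Qp p \<Longrightarrow> qp_mult p A B \<in> Qp p"
  by (elim Qp_cases) simp

lemma qp_add_assoc:
  "A \<in> Qp p \<Longrightarrow> B \<in> Qp p \<Longrightarrow> C \<in> Qp p \<Longrightarrow> qp_add p (qp_add p A B) C = qp_add p A (qp_add p B C)"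
  by (elim Qp_cases) (simp add: add.assoc)

lemma qp_add_commute: "A \<in> Qp p \<Longrightarrow> B \<in> Qp p \<Longrightarrow> qp_add p A B = qp_add p B A"
  by (elim Qp_cases) (simp add: add.commute)

lemma qp_add_zero_right [simp]: "A \<in> Qp p \<Longrightarrow> qp_add p A (qp_zero p) = A"
  unfolding qp_zero_def by (elim Qp_cases) simp

lemma qp_add_zero_left [simp]: "A \<in> Qp p \<Longrightarrow> qp_add p (qp_zero p) A = A"
  unfolding qp_zero_def by (elim Qp_cases) simp

lemma qp_add_neg_left: "A \<in> Qp p \<Longrightarrow> qp_add p (qp_neg p A) A = qp_zero p"
  unfolding qp_zero_def by (elim Qp_cases) simp

lemma qp_add_neg_right: "A \<in> Qp p \<Longrightarrow> qp_add p A (qp_neg p A) = qp_zero p"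
  unfolding qp_zero_def by (elim Qp_cases) simp

lemma qp_add_add_swap:
  "A \<in> Qp p \<Longrightarrow> B \<in> Qp p \<Longrightarrow> C \<in> Qp p \<Longrightarrow> D \<in> Qp p \<Longrightarrow>
   qp_add p (qp_add p A B) (qp_add p C D) = qp_add p (qp_add p A C) (qp_add p B D)"
  by (elim Qp_cases) (simp add: algebra_simps)

lemma qp_neg_add: "A \<in> Qp p \<Longrightarrow> B \<in> Qp p \<Longrightarrow> qp_neg p (qp_add p A B) = qp_add p (qp_neg p A) (qp_neg p B)"
  by (elim Qp_cases) simp

lemma qp_mult_add_right:
  "A \<in> Qp p \<Longrightarrow> B \<in> Qp p \<Longrightarrow> C \<in> Qp p \<Longrightarrow>
   qp_mult p A (qp_add p B C) = qp_add p (qp_mult p A B) (qp_mult p A C)"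
  by (elim Qp_cases) (simp add: distrib_left)

lemma qp_mult_zero_right [simp]: "A \<in> Qp p \<Longrightarrow> qp_mult p A (qp_zero p) = qp_zero p"
  unfolding qp_zero_def by (elim Qp_cases) simp

lemma qp_mult_neg_right: "A \<in> Qp p \<Longrightarrow> B \<in> Qp p \<Longrightarrow> qp_mult p A (qp_neg p B) = qp_neg p (qp_mult p A B)"
  by (elim Qp_cases) simp

lemma qp_abs_nonneg: "A \<in> Qp p \<Longrightarrow> qp_abs p A \<ge> 0"
  by (elim Qp_cases) (auto intro: LIMSEQ_le_const[OF qp_abs_qp_of])

lemma qp_abs_zero [simp]: "qp_abs p (qp_zero p) = 0"
  unfolding qp_zero_def using qp_abs_qp_of[of "\<lambda>n. 0"] by (simp add: LIMSEQ_const_iff)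

lemma qp_abs_eq_0_iff: "A \<in> Qp p \<Longrightarrow> qp_abs p A = 0 \<longleftrightarrow> A = qp_zero p"
proof (elim Qp_cases)
  fix f assume f: "padic_cauchy p f" and A: "A = qp_of p f"
  have "qp_abs p A = 0 \<longleftrightarrow> padic_null f"
    unfolding padic_null_def A using qp_abs_qp_of[OF f] LIMSEQ_unique by metis
  thus ?thesis unfolding A qp_zero_def using f by (simp add: qp_of_eq_iff)
qed

lemma qp_abs_neg: "A \<in> Qp p \<Longrightarrow> qp_abs p (qp_neg p A) = qp_abs p A"
proof (elim Qp_cases)
  fix f assume f: "padic_cauchy p f" and A: "A = qp_of p f"
  have "(\<lambda>n. padic_abs_rat p (f n)) \<longlonglongrightarrow> qp_abs p (qp_of p (\<lambda>n. - f n))"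
    using qp_abs_qp_of[of "\<lambda>n. - f n"] f by (simp add: padic_abs_rat_minus)
  thus ?thesis unfolding A using f qp_abs_qp_of[OF f] LIMSEQ_unique by auto
qed

lemma qp_abs_add_le_max: "A \<in> Qp p \<Longrightarrow> B \<in> Qp p \<Longrightarrow> qp_abs p (qp_add p A B) \<le> max (qp_abs p A) (qp_abs p B)"
proof (elim Qp_cases)
  fix f g assume f: "padic_cauchy p f" and A: "A = qp_of p f" and g: "padic_cauchy p g" and B: "B = qp_of p g"
  have "(\<lambda>n. max (padic_abs_rat p (f n)) (padic_abs_rat p (g n))) \<longlonglongrightarrow> max (qp_abs p A) (qp_abs p B)"
    unfolding A B by (intro tendsto_max qp_abs_qp_of f g)
  with qp_abs_qp_of[of "\<lambda>n. f n + g n"] show ?thesis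
    unfolding A B using f g by (auto intro: LIMSEQ_le padic_abs_rat_add_le_max)
qed

lemma qp_abs_mult: "A \<in> Qp p \<Longrightarrow> B \<in> Qp p \<Longrightarrow> qp_abs p (qp_mult p A B) = qp_abs p A * qp_abs p B"
proof (elim Qp_cases)
  fix f g assume f: "padic_cauchy p f" and A: "A = qp_of p f" and g: "padic_cauchy p g" and B: "B = qp_of p g"
  have "(\<lambda>n. padic_abs_rat p (f n * g n)) \<longlonglongrightarrow> qp_abs p A * qp_abs p B"
    unfolding padic_abs_rat_mult A B by (intro tendsto_mult qp_abs_qp_of f g)
  thus ?thesis using qp_abs_qp_of[of "\<lambda>n. f n * g n"] f g LIMSEQ_unique unfolding A B by auto
qed

end

section \<open>The topology of \<open>\<bbbQ>\<^sub>p\<close>\<close>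

text \<open>Outside \<open>\<bbbQ>\<^sub>p\<close> the distance is set to \<open>0\<close>, so that it is a metric in the sense of
  \<^locale>\<open>Metric_space\<close>, whose axioms are stated for all arguments.\<close>

definition qp_dist :: "nat \<Rightarrow> qp \<Rightarrow> qp \<Rightarrow> real" where
  "qp_dist p x y = (if x \<in> Qp p \<and> y \<in> Qp p then qp_abs p (qp_add p x (qp_neg p y)) else 0)"

context padic_prime
begin

lemma qp_neg_diff: "x \<in> Qp p \<Longrightarrow> y \<in> Qp p \<Longrightarrow> qp_neg p (qp_add p x (qp_neg p y)) = qp_add p y (qp_neg p x)"
  by (elim Qp_cases) simp

lemma qp_diff_add_diff:
  "x \<in> Qp p \<Longrightarrow> y \<in> Qp p \<Longrightarrow> z \<in> Qp p \<Longrightarrow>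
   qp_add p (qp_add p x (qp_neg p y)) (qp_add p y (qp_neg p z)) = qp_add p x (qp_neg p z)"
  by (elim Qp_cases) simp

lemma qp_diff_add_cancel: "x \<in> Qp p \<Longrightarrow> y \<in> Qp p \<Longrightarrow> qp_add p (qp_add p x (qp_neg p y)) y = x"
  by (elim Qp_cases) simp

lemma qp_neg_zero [simp]: "qp_neg p (qp_zero p) = qp_zero p"
  unfolding qp_zero_def by simp

lemma qp_dist_zero_right [simp]: "x \<in> Qp p \<Longrightarrow> qp_dist p x (qp_zero p) = qp_abs p x"
  unfolding qp_dist_def by simp

lemma Metric_space_Qp: "Metric_space (Qp p) (qp_dist p)"
proof
  show "0 \<le> qp_dist p x y" for x y
    unfolding qp_dist_def by (simp add: qp_abs_nonneg)
  show "qp_dist p x y = qp_dist p y x" for x y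
    unfolding qp_dist_def by (metis qp_abs_neg qp_add_in_Qp qp_neg_diff qp_neg_in_Qp)
  show "qp_dist p x y = 0 \<longleftrightarrow> x = y" if "x \<in> Qp p" "y \<in> Qp p" for x y
    unfolding qp_dist_def using that
    by (metis qp_abs_eq_0_iff qp_add_in_Qp qp_add_neg_right qp_add_zero_left qp_diff_add_cancel qp_neg_in_Qp)
  show "qp_dist p x z \<le> qp_dist p x y + qp_dist p y z" if "x \<in> Qp p" "y \<in> Qp p" "z \<in> Qp p" for x y z
    using that qp_abs_add_le_max[of "qp_add p x (qp_neg p y)" "qp_add p y (qp_neg p z)"]
      qp_abs_nonneg[of "qp_add p x (qp_neg p y)"] qp_abs_nonneg[of "qp_add p y (qp_neg p z)"]
    unfolding qp_dist_def by (simp add: qp_diff_add_diff)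
qed

sublocale Qp: Metric_space "Qp p" "qp_dist p"
  by (rule Metric_space_Qp)

lemma Qp_top_eq_mtopology: "Qp_top p = Qp.mtopology"
proof -
  have dist: "qp_dist p x y = qp_abs p (qp_add p y (qp_neg p x))" if "x \<in> Qp p" "y \<in> Qp p" for x y
    using that qp_neg_diff[of y x] qp_abs_neg[of "qp_add p y (qp_neg p x)"] by (simp add: qp_dist_def)
  have ball: "Qp.mball x r \<subseteq> U \<longleftrightarrow> (\<forall>y\<in>Qp p. qp_abs p (qp_add p y (qp_neg p x)) < r \<longrightarrow> y \<in> U)"
    if "x \<in> Qp p" for x r U
    using that by (auto simp: Qp.mball_def dist)
  let ?P = "\<lambda>U. U \<subseteq> Qp p \<and> (\<forall>x\<in>U. \<exists>e>0. \<forall>y\<in>Qp p. qp_abs p (qp_add p y (qp_neg p x)) < e \<longrightarrow> y \<in> U)"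
  have "?P U \<longleftrightarrow> openin Qp.mtopology U" for U
  proof
    assume P: "?P U"
    show "openin Qp.mtopology U"
      unfolding Qp.openin_mtopology
    proof (intro conjI allI impI)
      fix x assume x: "x \<in> U"
      then obtain e where "e > 0" "\<forall>y\<in>Qp p. qp_abs p (qp_add p y (qp_neg p x)) < e \<longrightarrow> y \<in> U"
        using P by blast
      moreover have "x \<in> Qp p" using x P by blast
      ultimately show "\<exists>r>0. Qp.mball x r \<subseteq> U" using ball by blast
    qed (use P in blast)
  next
    assume U: "openin Qp.mtopology U"
    hence sub: "U \<subseteq> Qp p" by (simp add: Qp.openin_mtopology)
    have "\<exists>e>0. \<forall>y\<in>Qp p. qp_abs p (qp_add p y (qp_neg p x)) < e \<longrightarrow> y \<in> U" if x: "x \<in> U" for x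
    proof -
      obtain r where "r > 0" "Qp.mball x r \<subseteq> U" using U x by (auto simp: Qp.openin_mtopology)
      thus ?thesis using ball[of x r U] x sub by blast
    qed
    thus "?P U" using sub by blast
  qed
  hence "?P = openin Qp.mtopology" by (rule ext)
  thus ?thesis unfolding Qp_top_def by (simp add: openin_inverse)
qed

lemma topspace_Qp_top [simp]: "topspace (Qp_top p) = Qp p"
  by (simp add: Qp_top_eq_mtopology)

lemma qp_dist_ultrametric:
  assumes "x \<in> Qp p" "y \<in> Qp p" "z \<in> Qp p"
  shows "qp_dist p x z \<le> max (qp_dist p x y) (qp_dist p y z)"
  using qp_abs_add_le_max[of "qp_add p x (qp_neg p y)" "qp_add p y (qp_neg p z)"] assms
  unfolding qp_dist_def qp_diff_add_diff[OF assms] by simp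

lemma Zp_subset_Qp: "Zp p \<subseteq> Qp p"
  unfolding Zp_def by auto

text \<open>In an ultrametric space closed balls are open.\<close>

lemma openin_Zp: "openin (Qp_top p) (Zp p)"
  unfolding Qp_top_eq_mtopology Qp.openin_mtopology
proof (intro conjI allI impI Zp_subset_Qp)
  fix x assume x: "x \<in> Zp p"
  have "y \<in> Zp p" if "y \<in> Qp p" "qp_dist p x y < 1" for y
    using qp_dist_ultrametric[of y x "qp_zero p"] that x Qp.commute[of x y] unfolding Zp_def by auto
  thus "\<exists>r>0. Qp.mball x r \<subseteq> Zp p" by (intro exI[of _ 1]) auto
qed

lemma qp_zero_in_Zp [simp]: "qp_zero p \<in> Zp p"
  unfolding Zp_def by simp

definition nonexpanding :: "(qp \<Rightarrow> qp \<Rightarrow> qp) \<Rightarrow> bool" where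
  "nonexpanding f \<longleftrightarrow> (\<forall>a\<in>Qp p. \<forall>b\<in>Qp p. f a b \<in> Qp p \<and>
      (\<forall>c\<in>Qp p. \<forall>d\<in>Qp p. qp_dist p (f a b) (f c d) \<le> max (qp_dist p a c) (qp_dist p b d)))"

lemma nonexpanding_qp_add: "nonexpanding (qp_add p)"
  unfolding nonexpanding_def
proof (intro ballI conjI)
  fix a b c d assume Q: "a \<in> Qp p" "b \<in> Qp p" "c \<in> Qp p" "d \<in> Qp p"
  have "qp_add p (qp_add p a b) (qp_neg p (qp_add p c d))
      = qp_add p (qp_add p a (qp_neg p c)) (qp_add p b (qp_neg p d))"
    using Q by (elim Qp_cases) (simp add: algebra_simps)
  thus "qp_dist p (qp_add p a b) (qp_add p c d) \<le> max (qp_dist p a c) (qp_dist p b d)"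
    using Q unfolding qp_dist_def by (simp add: qp_abs_add_le_max)
qed simp

lemma nonexpanding_qp_neg: "nonexpanding (\<lambda>a b. qp_neg p a)"
  unfolding nonexpanding_def
proof (intro ballI conjI)
  fix a b c d assume Q: "a \<in> Qp p" "b \<in> Qp p" "c \<in> Qp p" "d \<in> Qp p"
  have "qp_add p (qp_neg p a) (qp_neg p (qp_neg p c)) = qp_neg p (qp_add p a (qp_neg p c))"
    using Q by (elim Qp_cases) simp
  thus "qp_dist p (qp_neg p a) (qp_neg p c) \<le> max (qp_dist p a c) (qp_dist p b d)"
    using Q unfolding qp_dist_def by (simp add: qp_abs_neg)
qed simp

lemma nonexpanding_abs_le_max:
  assumes "nonexpanding f" "f (qp_zero p) (qp_zero p) = qp_zero p" "a \<in> Qp p" "b \<in> Qp p"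
  shows "qp_abs p (f a b) \<le> max (qp_abs p a) (qp_abs p b)"
  using assms unfolding nonexpanding_def by (metis qp_dist_zero_right qp_zero_in_Qp)

lemma continuous_map_nonexpanding:
  assumes f: "nonexpanding f"
    and g: "continuous_map X (Qp_top p) g" and h: "continuous_map X (Qp_top p) h"
  shows "continuous_map X (Qp_top p) (\<lambda>x. f (g x) (h x))"
  unfolding Qp_top_eq_mtopology Qp.continuous_map_to_metric
proof (intro ballI allI impI)
  fix x e assume x: "x \<in> topspace X" and e: "(e :: real) > 0"
  obtain U V where U: "openin X U" "x \<in> U" "\<forall>y\<in>U. g y \<in> Qp.mball (g x) e"
    and V: "openin X V" "x \<in> V" "\<forall>y\<in>V. h y \<in> Qp.mball (h x) e"
    using g h x e unfolding Qp_top_eq_mtopology Qp.continuous_map_to_metric by metis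
  have "f (g y) (h y) \<in> Qp.mball (f (g x) (h x)) e" if "y \<in> U \<inter> V" for y
    using that U(3) V(3) f unfolding nonexpanding_def Qp.mball_def by fastforce
  thus "\<exists>W. openin X W \<and> x \<in> W \<and> (\<forall>y\<in>W. f (g y) (h y) \<in> Qp.mball (f (g x) (h x)) e)"
    using U V by blast
qed

end

section \<open>The topology \<open>\<tau>\<close> on \<open>\<bbbQ>\<^sub>p(X)\<close>\<close>

lemma istopology_coherent:
  "istopology (\<lambda>A. A \<subseteq> S \<and> (\<forall>P. Q P \<longrightarrow> openin (T P) (A \<inter> E P)))"
  unfolding istopology_def
proof (rule conjI; intro allI impI)
  fix A B assume A: "A \<subseteq> S \<and> (\<forall>P. Q P \<longrightarrow> openin (T P) (A \<inter> E P))"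
    and B: "B \<subseteq> S \<and> (\<forall>P. Q P \<longrightarrow> openin (T P) (B \<inter> E P))"
  show "A \<inter> B \<subseteq> S \<and> (\<forall>P. Q P \<longrightarrow> openin (T P) (A \<inter> B \<inter> E P))"
  proof (intro conjI allI impI)
    fix P assume "Q P"
    hence "openin (T P) ((A \<inter> E P) \<inter> (B \<inter> E P))" using A B by blast
    moreover have "(A \<inter> E P) \<inter> (B \<inter> E P) = A \<inter> B \<inter> E P" by blast
    ultimately show "openin (T P) (A \<inter> B \<inter> E P)" by simp
  qed (use A in blast)
next
  fix \<A> assume H: "\<forall>A\<in>\<A>. A \<subseteq> S \<and> (\<forall>P. Q P \<longrightarrow> openin (T P) (A \<inter> E P))"
  show "\<Union>\<A> \<subseteq> S \<and> (\<forall>P. Q P \<longrightarrow> openin (T P) (\<Union>\<A> \<inter> E P))"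
  proof (intro conjI allI impI)
    fix P assume "Q P"
    hence "openin (T P) (\<Union>((\<lambda>A. A \<inter> E P) ` \<A>))" using H by (intro openin_Union) auto
    moreover have "\<Union>((\<lambda>A. A \<inter> E P) ` \<A>) = \<Union>\<A> \<inter> E P" by blast
    ultimately show "openin (T P) (\<Union>\<A> \<inter> E P)" by simp
  qed (use H in blast)
qed

lemma continuous_map_locally:
  assumes "\<And>x. x \<in> topspace X \<Longrightarrow> \<exists>U. openin X U \<and> x \<in> U \<and> continuous_map (subtopology X U) Y f"
  shows "continuous_map X Y f"
proof -
  obtain U where "\<And>x. x \<in> topspace X \<Longrightarrow> openin X (U x) \<and> x \<in> U x \<and> continuous_map (subtopology X (U x)) Y f"
    using assms by metis
  thus ?thesis by (intro pasting_lemma[of "topspace X" X U Y "\<lambda>_. f"]) auto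
qed

abbreviation Qp_product :: "nat \<Rightarrow> ('x \<Rightarrow> qp) topology" where
  "Qp_product p \<equiv> product_topology (\<lambda>i. Qp_top p) UNIV"

abbreviation EP_top :: "nat \<Rightarrow> 'x set \<Rightarrow> ('x \<Rightarrow> qp) topology" where
  "EP_top p P \<equiv> subtopology (Qp_product p) (EP p P)"

abbreviation large_coords :: "nat \<Rightarrow> ('x \<Rightarrow> qp) \<Rightarrow> 'x set" where
  "large_coords p \<xi> \<equiv> {i. qp_abs p (\<xi> i) > 1}"

context padic_prime
begin

lemma topspace_Qp_product: "topspace (Qp_product p) = {\<xi>. \<forall>i. \<xi> i \<in> Qp p}"
  by (simp add: PiE_UNIV_domain Pi_def)

lemma EP_subset_topspace: "EP p P \<subseteq> topspace (Qp_product p)"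
  unfolding topspace_Qp_product EP_def using Zp_subset_Qp by blast

lemma topspace_EP_top [simp]: "topspace (EP_top p P) = EP p P"
  using EP_subset_topspace by auto

lemma openin_EP_top_EP [simp]: "openin (EP_top p P) (EP p P)"
  by (rule iffD2[OF openin_subtopology_refl EP_subset_topspace])

lemma subtopology_EP_top: "U \<subseteq> EP p P \<Longrightarrow> subtopology (EP_top p P) U = subtopology (Qp_product p) U"
  by (simp add: subtopology_subtopology Int_absorb1)

lemma EP_mono: "P \<subseteq> Q \<Longrightarrow> EP p P \<subseteq> EP p Q"
  unfolding EP_def using Zp_subset_Qp by blast

lemma EP_subset_QpX: "finite P \<Longrightarrow> EP p P \<subseteq> QpX p"
proof
  fix \<xi> assume "finite P" "\<xi> \<in> EP p P"
  moreover from this have "large_coords p \<xi> \<subseteq> P" unfolding EP_def Zp_def by force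
  ultimately show "\<xi> \<in> QpX p" unfolding QpX_def EP_def using Zp_subset_Qp finite_subset by blast
qed

lemma EP_empty_subset_QpX: "\<xi> \<in> EP p {} \<Longrightarrow> \<xi> \<in> QpX p"
  using EP_subset_QpX[OF finite.emptyI] by blast

lemma QpX_in_EP_large_coords: "\<xi> \<in> QpX p \<Longrightarrow> \<xi> \<in> EP p (large_coords p \<xi>)"
  unfolding QpX_def EP_def Zp_def by auto

lemma finite_large_coords: "\<xi> \<in> QpX p \<Longrightarrow> finite (large_coords p \<xi>)"
  unfolding QpX_def by auto

lemma QpX_in_Qp: "\<xi> \<in> QpX p \<Longrightarrow> \<xi> i \<in> Qp p"
  unfolding QpX_def by auto

lemma openin_EP_Int_EP:
  assumes "finite P"
  obtains W where "openin (Qp_product p) W" "EP p Q \<inter> EP p P = W \<inter> EP p P"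
proof
  let ?W = "\<lambda>i. {\<xi> \<in> topspace (Qp_product p). \<xi> i \<in> Zp p}"
  have "continuous_map (Qp_product p) (Qp_top p) (\<lambda>\<xi>. \<xi> i)" for i
    by (rule continuous_map_product_projection) simp
  hence "openin (Qp_product p) (?W i)" for i
    using openin_Zp by (rule openin_continuous_map_preimage)
  thus "openin (Qp_product p) ((\<Inter>i\<in>P - Q. ?W i) \<inter> topspace (Qp_product p))"
    using assms by (intro openin_INT[of "P - Q"]) auto
  show "EP p Q \<inter> EP p P = (\<Inter>i\<in>P - Q. ?W i) \<inter> topspace (Qp_product p) \<inter> EP p P"
    using EP_subset_topspace[of P] by (auto simp: EP_def)
qed

lemma openin_tau:
  "openin (tau p) A \<longleftrightarrow> A \<subseteq> QpX p \<and> (\<forall>P. finite P \<longrightarrow> openin (EP_top p P) (A \<inter> EP p P))"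
  unfolding tau_def by (subst topology_inverse'[OF istopology_coherent]) simp

lemma topspace_tau [simp]: "topspace (tau p :: ('x \<Rightarrow> qp) topology) = QpX p"
proof -
  have "openin (EP_top p P) (QpX p \<inter> EP p P)" if "finite P" for P
    using EP_subset_QpX[OF that] openin_EP_top_EP by (metis Int_absorb1)
  hence "openin (tau p) (QpX p)" unfolding openin_tau by blast
  thus ?thesis using openin_subset openin_tau by (metis openin_topspace subset_antisym)
qed

lemma openin_tau_if_openin_EP_top:
  fixes Q :: "'x set"
  assumes Q: "finite Q" and B: "openin (EP_top p Q) B"
  shows "openin (tau p) B"
  unfolding openin_tau
proof (intro conjI allI impI)
  show "B \<subseteq> QpX p" using openin_subset[OF B] EP_subset_QpX[OF Q] by auto
  fix P :: "'x set" assume "finite P"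
  then obtain W where W: "openin (Qp_product p) W" "EP p Q \<inter> EP p P = W \<inter> EP p P"
    using openin_EP_Int_EP by blast
  obtain V where V: "openin (Qp_product p) V" "B = V \<inter> EP p Q"
    using B unfolding openin_subtopology by auto
  have "B \<inter> EP p P = (V \<inter> W) \<inter> EP p P" using V(2) W(2) by blast
  thus "openin (EP_top p P) (B \<inter> EP p P)" unfolding openin_subtopology using V(1) W(1) by blast
qed

lemma openin_tau_EP: "finite Q \<Longrightarrow> openin (tau p) (EP p Q)"
  by (rule openin_tau_if_openin_EP_top[OF _ openin_EP_top_EP])

lemma subtopology_tau_EP: "finite P \<Longrightarrow> subtopology (tau p) (EP p P) = EP_top p P"
  unfolding topology_eq openin_subtopology
  by (metis openin_subset openin_tau openin_tau_if_openin_EP_top topspace_EP_top Int_absorb2 openin_subtopology)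

lemma continuous_map_tauI:
  fixes F :: "('x \<Rightarrow> qp) \<Rightarrow> 'y"
  assumes "\<And>\<xi>. \<xi> \<in> QpX p \<Longrightarrow> F \<xi> \<in> topspace Y"
    and "\<And>P. finite P \<Longrightarrow> continuous_map (EP_top p P) Y F"
  shows "continuous_map (tau p) Y F"
  unfolding continuous_map
proof (intro conjI allI impI)
  show "F ` topspace (tau p) \<subseteq> topspace Y" using assms(1) by auto
  fix V assume V: "openin Y V"
  have "openin (EP_top p P) ({\<xi> \<in> QpX p. F \<xi> \<in> V} \<inter> EP p P)" if "finite P" for P :: "'x set"
  proof -
    have eq: "{\<xi> \<in> QpX p. F \<xi> \<in> V} \<inter> EP p P = {\<xi> \<in> EP p P. F \<xi> \<in> V}"
      using EP_subset_QpX[OF that] by auto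
    have "openin (EP_top p P) {\<xi> \<in> topspace (EP_top p P). F \<xi> \<in> V}"
      by (rule openin_continuous_map_preimage[OF assms(2)[OF that] V])
    thus ?thesis unfolding topspace_EP_top eq .
  qed
  thus "openin (tau p) {\<xi> \<in> topspace (tau p). F \<xi> \<in> V}"
    unfolding openin_tau topspace_tau by blast
qed

lemma continuous_map_tau_tau_locallyI:
  fixes F :: "('x \<Rightarrow> qp) \<Rightarrow> ('x \<Rightarrow> qp)"
  assumes QpX: "\<And>\<xi>. \<xi> \<in> QpX p \<Longrightarrow> F \<xi> \<in> QpX p"
    and local: "\<And>P \<xi>0. finite P \<Longrightarrow> \<xi>0 \<in> EP p P \<Longrightarrow> \<exists>U Q. openin (EP_top p P) U \<and> \<xi>0 \<in> U \<and>
       finite Q \<and> F ` U \<subseteq> EP p Q \<and> (\<forall>k. continuous_map (subtopology (Qp_product p) U) (Qp_top p) (\<lambda>\<xi>. F \<xi> k))"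
  shows "continuous_map (tau p) (tau p) F"
proof (rule continuous_map_tauI)
  fix P :: "'x set" assume P: "finite P"
  show "continuous_map (EP_top p P) (tau p) F"
  proof (rule continuous_map_locally)
    fix \<xi>0 assume "\<xi>0 \<in> topspace (EP_top p P)"
    hence "\<xi>0 \<in> EP p P" by (simp only: topspace_EP_top)
    then obtain U Q where U: "openin (EP_top p P) U" "\<xi>0 \<in> U" "finite Q" "F ` U \<subseteq> EP p Q"
      and cont: "\<And>k. continuous_map (subtopology (Qp_product p) U) (Qp_top p) (\<lambda>\<xi>. F \<xi> k)"
      using local[OF P] by blast
    have "continuous_map (subtopology (Qp_product p) U) (EP_top p Q) F"
      using cont U(4) by (auto simp: continuous_map_in_subtopology continuous_map_componentwise_UNIV)
    hence "continuous_map (subtopology (EP_top p P) U) (tau p) F"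
      using openin_subset[OF U(1)]
      by (simp add: subtopology_EP_top subtopology_tau_EP[OF U(3), symmetric] continuous_map_in_subtopology)
    thus "\<exists>U. openin (EP_top p P) U \<and> \<xi>0 \<in> U \<and> continuous_map (subtopology (EP_top p P) U) (tau p) F"
      using U by blast
  qed
qed (use QpX in simp)

lemma continuous_map_tau_EP_preimage:
  fixes T :: "('x \<Rightarrow> qp) \<Rightarrow> ('x \<Rightarrow> qp)"
  assumes T: "continuous_map (tau p) (tau p) T" and P: "finite P" and Q: "finite Q"
  shows "openin (EP_top p P) {\<xi> \<in> EP p P. T \<xi> \<in> EP p Q}"
    and "continuous_map (subtopology (Qp_product p) {\<xi> \<in> EP p P. T \<xi> \<in> EP p Q}) (Qp_top p) (\<lambda>\<xi>. T \<xi> k)"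
proof -
  let ?U = "{\<xi> \<in> EP p P. T \<xi> \<in> EP p Q}"
  have "openin (tau p) {\<xi> \<in> QpX p. T \<xi> \<in> EP p Q}"
    using openin_continuous_map_preimage[OF T openin_tau_EP[OF Q]] by simp
  moreover have "?U = {\<xi> \<in> QpX p. T \<xi> \<in> EP p Q} \<inter> EP p P" using EP_subset_QpX[OF P] by auto
  ultimately show "openin (EP_top p P) ?U"
    unfolding subtopology_tau_EP[OF P, symmetric] openin_subtopology by blast
  have "subtopology (tau p) ?U = subtopology (EP_top p P) ?U"
    by (metis (no_types, lifting) subtopology_tau_EP[OF P] subtopology_subtopology Int_absorb1 mem_Collect_eq subsetI)
  also have "\<dots> = subtopology (Qp_product p) ?U" by (rule subtopology_EP_top) auto
  finally have "subtopology (Qp_product p) ?U = subtopology (tau p) ?U" ..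
  moreover have "continuous_map (subtopology (tau p) ?U) (subtopology (tau p) (EP p Q)) T"
    using T by (auto intro: continuous_map_from_subtopology simp: continuous_map_in_subtopology)
  ultimately have "continuous_map (subtopology (Qp_product p) ?U) (Qp_product p) T"
    by (simp add: subtopology_tau_EP[OF Q] continuous_map_in_subtopology)
  thus "continuous_map (subtopology (Qp_product p) ?U) (Qp_top p) (\<lambda>\<xi>. T \<xi> k)"
    by (simp add: continuous_map_componentwise_UNIV)
qed

lemma bdd_above_abs_QpX: "\<xi> \<in> QpX p \<Longrightarrow> bdd_above (range (\<lambda>i. qp_abs p (\<xi> i)))"
  using finite_large_coords[of \<xi>]
  by (intro bdd_aboveI2[of _ _ "max 1 (Max ((\<lambda>i. qp_abs p (\<xi> i)) ` large_coords p \<xi>))"])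
     (metis (mono_tags, lifting) Max_ge finite_imageI image_eqI le_max_iff_disj mem_Collect_eq not_less)

lemma vnorm_le_1_iff: "\<xi> \<in> QpX p \<Longrightarrow> vnorm p \<xi> \<le> 1 \<longleftrightarrow> \<xi> \<in> EP p {}"
  unfolding vnorm_def EP_def Zp_def
  by (auto simp: QpX_in_Qp cSUP_le_iff bdd_above_abs_QpX)

end

section \<open>The ring \<open>\<B>\<^sub>(\<^sub>1\<^sub>)(\<bbbQ>\<^sub>p(X))\<close>\<close>

lemma carrier_Bop1_ring [simp]: "carrier (Bop1_ring p) = Bop1 p"
  by (simp add: Bop1_ring_def)

lemma add_Bop1_ring: "S \<oplus>\<^bsub>Bop1_ring p\<^esub> T = restrict (\<lambda>\<xi>. vadd p (S \<xi>) (T \<xi>)) (QpX p)"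
  by (simp add: Bop1_ring_def)

lemma mult_Bop1_ring: "S \<otimes>\<^bsub>Bop1_ring p\<^esub> T = restrict (S \<circ> T) (QpX p)"
  by (simp add: Bop1_ring_def)

lemma one_Bop1_ring: "\<one>\<^bsub>Bop1_ring p\<^esub> = restrict id (QpX p)"
  by (simp add: Bop1_ring_def)

lemma zero_Bop1_ring: "\<zero>\<^bsub>Bop1_ring p\<^esub> = restrict (\<lambda>\<xi>. vzero p) (QpX p)"
  by (simp add: Bop1_ring_def)

definition Bop_neg :: "nat \<Rightarrow> (('x \<Rightarrow> qp) \<Rightarrow> ('x \<Rightarrow> qp)) \<Rightarrow> ('x \<Rightarrow> qp) \<Rightarrow> ('x \<Rightarrow> qp)" where
  "Bop_neg p T = restrict (\<lambda>\<xi> i. qp_neg p (T \<xi> i)) (QpX p)"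

context padic_prime
begin

lemma vzero_in_QpX [simp]: "vzero p \<in> QpX p"
  unfolding QpX_def vzero_def by simp

lemma vzero_in_EP [simp]: "vzero p \<in> EP p P"
  unfolding EP_def vzero_def by simp

lemma EP_in_Qp: "\<xi> \<in> EP p P \<Longrightarrow> \<xi> i \<in> Qp p"
  unfolding EP_def using Zp_subset_Qp by blast

lemma nonexpanding_in_Zp:
  assumes "nonexpanding f" "f (qp_zero p) (qp_zero p) = qp_zero p" "a \<in> Zp p" "b \<in> Zp p"
  shows "f a b \<in> Zp p"
  using assms nonexpanding_abs_le_max[OF assms(1,2)] unfolding Zp_def nonexpanding_def
  by (smt (verit, best) mem_Collect_eq)

lemma nonexpanding_pointwise_in_EP:
  assumes "nonexpanding f" "f (qp_zero p) (qp_zero p) = qp_zero p" "\<xi> \<in> EP p Q" "\<eta> \<in> EP p Q"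
  shows "(\<lambda>i. f (\<xi> i) (\<eta> i)) \<in> EP p Q"
  using assms nonexpanding_in_Zp[OF assms(1,2)] EP_in_Qp[OF assms(3)] EP_in_Qp[OF assms(4)]
  unfolding EP_def nonexpanding_def by blast

lemma pointwise_in_QpX:
  assumes f: "nonexpanding f" "f (qp_zero p) (qp_zero p) = qp_zero p"
    and \<xi>: "\<xi> \<in> QpX p" and \<eta>: "\<eta> \<in> QpX p"
  shows "(\<lambda>i. f (\<xi> i) (\<eta> i)) \<in> QpX p"
proof -
  let ?Q = "large_coords p \<xi> \<union> large_coords p \<eta>"
  have "\<xi> \<in> EP p ?Q" "\<eta> \<in> EP p ?Q"
    using EP_mono[of _ ?Q] QpX_in_EP_large_coords[OF \<xi>] QpX_in_EP_large_coords[OF \<eta>] by blast+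
  hence "(\<lambda>i. f (\<xi> i) (\<eta> i)) \<in> EP p ?Q" by (rule nonexpanding_pointwise_in_EP[OF f])
  moreover have "finite ?Q" using finite_large_coords[OF \<xi>] finite_large_coords[OF \<eta>] by simp
  ultimately show ?thesis using EP_subset_QpX by blast
qed

lemma vadd_in_QpX: "\<xi> \<in> QpX p \<Longrightarrow> \<eta> \<in> QpX p \<Longrightarrow> vadd p \<xi> \<eta> \<in> QpX p"
  unfolding vadd_def by (rule pointwise_in_QpX[OF nonexpanding_qp_add]) simp_all

lemma vsmult_in_QpX:
  assumes a: "a \<in> Zp p" and \<xi>: "\<xi> \<in> QpX p"
  shows "vsmult p a \<xi> \<in> QpX p"
proof -
  have "qp_abs p (vsmult p a \<xi> i) \<le> qp_abs p (\<xi> i)" for i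
    using a \<xi> unfolding vsmult_def Zp_def
    by (simp add: QpX_in_Qp qp_abs_mult qp_abs_nonneg mult_left_le_one_le)
  hence "large_coords p (vsmult p a \<xi>) \<subseteq> large_coords p \<xi>"
    using less_le_trans by blast
  thus ?thesis using assms Zp_subset_Qp unfolding QpX_def vsmult_def by (auto intro: finite_subset)
qed

lemma Bop1D:
  fixes T :: "('x \<Rightarrow> qp) \<Rightarrow> ('x \<Rightarrow> qp)"
  assumes "T \<in> Bop1 p"
  shows "T \<in> extensional (QpX p)" "continuous_map (tau p) (tau p) T"
    "\<And>\<xi> \<eta>. \<xi> \<in> QpX p \<Longrightarrow> \<eta> \<in> QpX p \<Longrightarrow> T (vadd p \<xi> \<eta>) = vadd p (T \<xi>) (T \<eta>)"
    "\<And>a \<xi>. a \<in> Zp p \<Longrightarrow> \<xi> \<in> QpX p \<Longrightarrow> T (vsmult p a \<xi>) = vsmult p a (T \<xi>)"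
    "\<And>\<xi>. \<xi> \<in> QpX p \<Longrightarrow> T \<xi> \<in> QpX p"
    "\<And>\<xi>. \<xi> \<in> EP p {} \<Longrightarrow> T \<xi> \<in> EP p {}"
proof -
  show cont: "continuous_map (tau p) (tau p) T"
    and "T \<in> extensional (QpX p)"
    "\<And>\<xi> \<eta>. \<xi> \<in> QpX p \<Longrightarrow> \<eta> \<in> QpX p \<Longrightarrow> T (vadd p \<xi> \<eta>) = vadd p (T \<xi>) (T \<eta>)"
    "\<And>a \<xi>. a \<in> Zp p \<Longrightarrow> \<xi> \<in> QpX p \<Longrightarrow> T (vsmult p a \<xi>) = vsmult p a (T \<xi>)"
    using assms unfolding Bop1_def Bop_def by auto
  show QpX: "\<And>\<xi>. \<xi> \<in> QpX p \<Longrightarrow> T \<xi> \<in> QpX p"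
    using continuous_map_image_subset_topspace[OF cont] by auto
  show "T \<xi> \<in> EP p {}" if \<xi>: "\<xi> \<in> EP p {}" for \<xi>
  proof -
    have \<xi>X: "\<xi> \<in> QpX p" using \<xi> EP_subset_QpX[of "{}"] by auto
    hence "vnorm p \<xi> \<le> 1" using \<xi> vnorm_le_1_iff by blast
    hence "vnorm p (T \<xi>) \<le> 1" using assms \<xi>X unfolding Bop1_def by blast
    thus "T \<xi> \<in> EP p {}" using vnorm_le_1_iff QpX[OF \<xi>X] by blast
  qed
qed

lemma Bop1I:
  fixes T :: "('x \<Rightarrow> qp) \<Rightarrow> ('x \<Rightarrow> qp)"
  assumes "T \<in> extensional (QpX p)" and cont: "continuous_map (tau p) (tau p) T"
    and "\<And>\<xi> \<eta>. \<xi> \<in> QpX p \<Longrightarrow> \<eta> \<in> QpX p \<Longrightarrow> T (vadd p \<xi> \<eta>) = vadd p (T \<xi>) (T \<eta>)"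
    and "\<And>a \<xi>. a \<in> Zp p \<Longrightarrow> \<xi> \<in> QpX p \<Longrightarrow> T (vsmult p a \<xi>) = vsmult p a (T \<xi>)"
    and ball: "\<And>\<xi>. \<xi> \<in> EP p {} \<Longrightarrow> T \<xi> \<in> EP p {}"
  shows "T \<in> Bop1 p"
proof -
  have "T \<xi> \<in> QpX p" if "\<xi> \<in> QpX p" for \<xi>
    using continuous_map_image_subset_topspace[OF cont] that by auto
  hence "\<forall>\<xi>\<in>QpX p. vnorm p \<xi> \<le> 1 \<longrightarrow> vnorm p (T \<xi>) \<le> 1"
    using ball vnorm_le_1_iff by blast
  thus ?thesis using assms(1-4) unfolding Bop1_def Bop_def by simp
qed

lemma continuous_map_tau_pointwise:
  fixes S T :: "('x \<Rightarrow> qp) \<Rightarrow> ('x \<Rightarrow> qp)"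
  assumes f: "nonexpanding f" "f (qp_zero p) (qp_zero p) = qp_zero p"
    and S: "continuous_map (tau p) (tau p) S" and T: "continuous_map (tau p) (tau p) T"
  shows "continuous_map (tau p) (tau p) (restrict (\<lambda>\<xi> i. f (S \<xi> i) (T \<xi> i)) (QpX p))"
    (is "continuous_map _ _ ?F")
proof (rule continuous_map_tau_tau_locallyI)
  have SX: "S \<xi> \<in> QpX p" and TX: "T \<xi> \<in> QpX p" if "\<xi> \<in> QpX p" for \<xi>
    using continuous_map_image_subset_topspace[OF S] continuous_map_image_subset_topspace[OF T] that by auto
  show "?F \<xi> \<in> QpX p" if "\<xi> \<in> QpX p" for \<xi>
    using pointwise_in_QpX[OF f SX TX] that by simp
  fix P and \<xi>0 :: "'x \<Rightarrow> qp" assume P: "finite P" and \<xi>0: "\<xi>0 \<in> EP p P"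
  have \<xi>0X: "\<xi>0 \<in> QpX p" using EP_subset_QpX[OF P] \<xi>0 by auto
  define Q where "Q = large_coords p (S \<xi>0) \<union> large_coords p (T \<xi>0)"
  have Q: "finite Q"
    unfolding Q_def using finite_large_coords[OF SX[OF \<xi>0X]] finite_large_coords[OF TX[OF \<xi>0X]] by simp
  define U where "U = {\<xi> \<in> EP p P. S \<xi> \<in> EP p Q} \<inter> {\<xi> \<in> EP p P. T \<xi> \<in> EP p Q}"
  have UX: "U \<subseteq> QpX p" using EP_subset_QpX[OF P] unfolding U_def by auto
  have "openin (EP_top p P) U"
    unfolding U_def by (intro openin_Int continuous_map_tau_EP_preimage(1) S T P Q)
  moreover have "\<xi>0 \<in> U"
    using \<xi>0 QpX_in_EP_large_coords[OF SX[OF \<xi>0X]] QpX_in_EP_large_coords[OF TX[OF \<xi>0X]]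
      EP_mono[of _ Q] unfolding U_def Q_def by blast
  moreover have "?F ` U \<subseteq> EP p Q"
  proof
    fix \<eta> assume "\<eta> \<in> ?F ` U"
    then obtain \<xi> where "\<xi> \<in> U" "\<eta> = ?F \<xi>" by blast
    thus "\<eta> \<in> EP p Q" using nonexpanding_pointwise_in_EP[OF f] UX unfolding U_def by auto
  qed
  moreover have "continuous_map (subtopology (Qp_product p) U) (Qp_top p) (\<lambda>\<xi>. ?F \<xi> k)" for k
  proof -
    have "continuous_map (subtopology (Qp_product p) U) (Qp_top p) (\<lambda>\<xi>. S \<xi> k)"
      by (rule continuous_map_from_subtopology_mono[OF continuous_map_tau_EP_preimage(2)[OF S P Q]])
         (auto simp: U_def)
    moreover have "continuous_map (subtopology (Qp_product p) U) (Qp_top p) (\<lambda>\<xi>. T \<xi> k)"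
      by (rule continuous_map_from_subtopology_mono[OF continuous_map_tau_EP_preimage(2)[OF T P Q]])
         (auto simp: U_def)
    ultimately have "continuous_map (subtopology (Qp_product p) U) (Qp_top p) (\<lambda>\<xi>. f (S \<xi> k) (T \<xi> k))"
      by (rule continuous_map_nonexpanding[OF f(1)])
    thus ?thesis by (rule continuous_map_eq) (use UX in auto)
  qed
  ultimately show "\<exists>U Q. openin (EP_top p P) U \<and> \<xi>0 \<in> U \<and> finite Q \<and> ?F ` U \<subseteq> EP p Q \<and>
      (\<forall>k. continuous_map (subtopology (Qp_product p) U) (Qp_top p) (\<lambda>\<xi>. ?F \<xi> k))"
    using Q by blast
qed

lemma zero_in_Bop1: "restrict (\<lambda>\<xi>. vzero p) (QpX p) \<in> (Bop1 p :: (('x \<Rightarrow> qp) \<Rightarrow> ('x \<Rightarrow> qp)) set)"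
  (is "?Z \<in> _")
proof (rule Bop1I)
  show "continuous_map (tau p) (tau p) ?Z"
    by (rule continuous_map_eq[of _ _ "\<lambda>\<xi>. vzero p"]) auto
  show "?Z (vadd p \<xi> \<eta>) = vadd p (?Z \<xi>) (?Z \<eta>)" if "\<xi> \<in> QpX p" "\<eta> \<in> QpX p" for \<xi> \<eta>
    using that vadd_in_QpX[OF that] by (simp add: vadd_def vzero_def)
  show "?Z (vsmult p a \<xi>) = vsmult p a (?Z \<xi>)" if "a \<in> Zp p" "\<xi> \<in> QpX p" for a \<xi>
    using that vsmult_in_QpX[OF that] Zp_subset_Qp by (auto simp: vsmult_def vzero_def)
  show "?Z \<xi> \<in> EP p {}" if "\<xi> \<in> EP p {}" for \<xi>
    using EP_empty_subset_QpX[OF that] by simp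
qed simp

lemma one_in_Bop1: "restrict id (QpX p) \<in> (Bop1 p :: (('x \<Rightarrow> qp) \<Rightarrow> ('x \<Rightarrow> qp)) set)"
proof (rule Bop1I)
  show "continuous_map (tau p) (tau p) (restrict id (QpX p) :: ('x \<Rightarrow> qp) \<Rightarrow> ('x \<Rightarrow> qp))"
    by (rule continuous_map_eq[OF continuous_map_id]) auto
qed (auto simp: vadd_in_QpX vsmult_in_QpX EP_empty_subset_QpX)

lemma comp_in_Bop1:
  fixes S T :: "('x \<Rightarrow> qp) \<Rightarrow> ('x \<Rightarrow> qp)"
  assumes S: "S \<in> Bop1 p" and T: "T \<in> Bop1 p"
  shows "restrict (S \<circ> T) (QpX p) \<in> Bop1 p"
proof -
  note s = Bop1D[OF S] and t = Bop1D[OF T]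
  show ?thesis
  proof (rule Bop1I)
    show "continuous_map (tau p) (tau p) (restrict (S \<circ> T) (QpX p))"
      by (rule continuous_map_eq[OF continuous_map_compose[OF t(2) s(2)]]) auto
  qed (use s t in \<open>auto simp: vadd_in_QpX vsmult_in_QpX EP_empty_subset_QpX\<close>)
qed

lemma add_in_Bop1:
  fixes S T :: "('x \<Rightarrow> qp) \<Rightarrow> ('x \<Rightarrow> qp)"
  assumes S: "S \<in> Bop1 p" and T: "T \<in> Bop1 p"
  shows "restrict (\<lambda>\<xi>. vadd p (S \<xi>) (T \<xi>)) (QpX p) \<in> Bop1 p" (is "?F \<in> _")
proof -
  note s = Bop1D[OF S] and t = Bop1D[OF T]
  show ?thesis
  proof (rule Bop1I)
    show "continuous_map (tau p) (tau p) ?F"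
      using continuous_map_tau_pointwise[OF nonexpanding_qp_add _ s(2) t(2)] by (simp add: vadd_def)
    show "?F (vadd p \<xi> \<eta>) = vadd p (?F \<xi>) (?F \<eta>)" if "\<xi> \<in> QpX p" "\<eta> \<in> QpX p" for \<xi> \<eta>
      using that vadd_in_QpX[OF that] s(3,5) t(3,5) by (auto simp: vadd_def qp_add_add_swap QpX_in_Qp)
    show "?F (vsmult p a \<xi>) = vsmult p a (?F \<xi>)" if "a \<in> Zp p" "\<xi> \<in> QpX p" for a \<xi>
      using that vsmult_in_QpX[OF that] s(4,5) t(4,5) Zp_subset_Qp
      by (auto simp: vadd_def vsmult_def qp_mult_add_right QpX_in_Qp)
    show "?F \<xi> \<in> EP p {}" if "\<xi> \<in> EP p {}" for \<xi>
      using EP_empty_subset_QpX[OF that] nonexpanding_pointwise_in_EP[OF nonexpanding_qp_add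
          qp_add_zero_left[OF qp_zero_in_Qp] s(6)[OF that] t(6)[OF that]]
      by (simp add: vadd_def)
  qed simp
qed

lemma Bop_neg_in_Bop1:
  fixes T :: "('x \<Rightarrow> qp) \<Rightarrow> ('x \<Rightarrow> qp)"
  assumes T: "T \<in> Bop1 p"
  shows "Bop_neg p T \<in> Bop1 p"
proof -
  note t = Bop1D[OF T]
  show ?thesis
  proof (rule Bop1I)
    show "continuous_map (tau p) (tau p) (Bop_neg p T)"
      unfolding Bop_neg_def by (rule continuous_map_tau_pointwise[OF nonexpanding_qp_neg _ t(2) t(2)]) simp
    show "Bop_neg p T (vadd p \<xi> \<eta>) = vadd p (Bop_neg p T \<xi>) (Bop_neg p T \<eta>)"
      if "\<xi> \<in> QpX p" "\<eta> \<in> QpX p" for \<xi> \<eta>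
      using that vadd_in_QpX[OF that] t(3,5) by (auto simp: Bop_neg_def vadd_def qp_neg_add QpX_in_Qp)
    show "Bop_neg p T (vsmult p a \<xi>) = vsmult p a (Bop_neg p T \<xi>)" if "a \<in> Zp p" "\<xi> \<in> QpX p" for a \<xi>
      using that vsmult_in_QpX[OF that] t(4,5) Zp_subset_Qp
      by (auto simp: Bop_neg_def vsmult_def qp_mult_neg_right QpX_in_Qp)
    show "Bop_neg p T \<xi> \<in> EP p {}" if "\<xi> \<in> EP p {}" for \<xi>
      using EP_empty_subset_QpX[OF that] nonexpanding_pointwise_in_EP[OF nonexpanding_qp_neg
          qp_neg_zero t(6)[OF that] t(6)[OF that]]
      by (simp add: Bop_neg_def)
  qed (simp add: Bop_neg_def)
qed

lemma abelian_group_Bop1_ring: "abelian_group (Bop1_ring p :: (('x \<Rightarrow> qp) \<Rightarrow> ('x \<Rightarrow> qp)) ring)"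
proof (rule abelian_groupI, unfold carrier_Bop1_ring add_Bop1_ring zero_Bop1_ring)
  fix x y z :: "('x \<Rightarrow> qp) \<Rightarrow> ('x \<Rightarrow> qp)"
  assume x: "x \<in> Bop1 p"
  note xx = Bop1D[OF x]
  show "\<exists>y\<in>Bop1 p. restrict (\<lambda>\<xi>. vadd p (y \<xi>) (x \<xi>)) (QpX p) = restrict (\<lambda>\<xi>. vzero p) (QpX p)"
  proof (intro bexI[of _ "Bop_neg p x"] Bop_neg_in_Bop1 x)
    show "restrict (\<lambda>\<xi>. vadd p (Bop_neg p x \<xi>) (x \<xi>)) (QpX p) = restrict (\<lambda>\<xi>. vzero p) (QpX p)"
      by (rule extensionalityI) (auto simp: Bop_neg_def vadd_def vzero_def qp_add_neg_left QpX_in_Qp xx(5))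
  qed
  show "restrict (\<lambda>\<xi>. vadd p (restrict (\<lambda>\<xi>. vzero p) (QpX p) \<xi>) (x \<xi>)) (QpX p) = x"
    by (rule extensionalityI[OF _ xx(1)]) (auto simp: vadd_def vzero_def QpX_in_Qp xx(5))
  assume y: "y \<in> Bop1 p"
  note yy = Bop1D[OF y]
  show "restrict (\<lambda>\<xi>. vadd p (x \<xi>) (y \<xi>)) (QpX p) \<in> Bop1 p" by (rule add_in_Bop1[OF x y])
  show "restrict (\<lambda>\<xi>. vadd p (x \<xi>) (y \<xi>)) (QpX p) = restrict (\<lambda>\<xi>. vadd p (y \<xi>) (x \<xi>)) (QpX p)"
    by (rule extensionalityI) (auto simp: vadd_def qp_add_commute QpX_in_Qp xx(5) yy(5))
  assume z: "z \<in> Bop1 p"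
  note zz = Bop1D[OF z]
  show "restrict (\<lambda>\<xi>. vadd p (restrict (\<lambda>\<xi>. vadd p (x \<xi>) (y \<xi>)) (QpX p) \<xi>) (z \<xi>)) (QpX p) =
        restrict (\<lambda>\<xi>. vadd p (x \<xi>) (restrict (\<lambda>\<xi>. vadd p (y \<xi>) (z \<xi>)) (QpX p) \<xi>)) (QpX p)"
    by (rule extensionalityI) (auto simp: vadd_def qp_add_assoc QpX_in_Qp xx(5) yy(5) zz(5))
qed (rule zero_in_Bop1)

lemma monoid_Bop1_ring: "monoid (Bop1_ring p :: (('x \<Rightarrow> qp) \<Rightarrow> ('x \<Rightarrow> qp)) ring)"
proof (rule monoidI, unfold carrier_Bop1_ring mult_Bop1_ring one_Bop1_ring)
  fix x y z :: "('x \<Rightarrow> qp) \<Rightarrow> ('x \<Rightarrow> qp)"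
  assume x: "x \<in> Bop1 p"
  note xx = Bop1D[OF x]
  show "restrict (restrict id (QpX p) \<circ> x) (QpX p) = x"
    by (rule extensionalityI[OF _ xx(1)]) (auto simp: xx(5))
  show "restrict (x \<circ> restrict id (QpX p)) (QpX p) = x"
    by (rule extensionalityI[OF _ xx(1)]) auto
  assume y: "y \<in> Bop1 p"
  show "restrict (x \<circ> y) (QpX p) \<in> Bop1 p" by (rule comp_in_Bop1[OF x y])
  assume z: "z \<in> Bop1 p"
  note zz = Bop1D[OF z]
  show "restrict (restrict (x \<circ> y) (QpX p) \<circ> z) (QpX p) = restrict (x \<circ> restrict (y \<circ> z) (QpX p)) (QpX p)"
    by (rule extensionalityI) (auto simp: zz(5))
qed (rule one_in_Bop1)

lemma ring_Bop1_ring: "ring (Bop1_ring p :: (('x \<Rightarrow> qp) \<Rightarrow> ('x \<Rightarrow> qp)) ring)"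
proof (rule ringI[OF abelian_group_Bop1_ring monoid_Bop1_ring])
  fix x y z :: "('x \<Rightarrow> qp) \<Rightarrow> ('x \<Rightarrow> qp)"
  assume "x \<in> carrier (Bop1_ring p)" "y \<in> carrier (Bop1_ring p)" "z \<in> carrier (Bop1_ring p)"
  note xx = Bop1D[OF this(1)[unfolded carrier_Bop1_ring]] and yy = Bop1D[OF this(2)[unfolded carrier_Bop1_ring]]
    and zz = Bop1D[OF this(3)[unfolded carrier_Bop1_ring]]
  show "(x \<oplus>\<^bsub>Bop1_ring p\<^esub> y) \<otimes>\<^bsub>Bop1_ring p\<^esub> z = x \<otimes>\<^bsub>Bop1_ring p\<^esub> z \<oplus>\<^bsub>Bop1_ring p\<^esub> y \<otimes>\<^bsub>Bop1_ring p\<^esub> z"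
    unfolding add_Bop1_ring mult_Bop1_ring by (rule extensionalityI) (auto simp: zz(5))
  show "z \<otimes>\<^bsub>Bop1_ring p\<^esub> (x \<oplus>\<^bsub>Bop1_ring p\<^esub> y) = z \<otimes>\<^bsub>Bop1_ring p\<^esub> x \<oplus>\<^bsub>Bop1_ring p\<^esub> z \<otimes>\<^bsub>Bop1_ring p\<^esub> y"
    unfolding add_Bop1_ring mult_Bop1_ring by (rule extensionalityI) (auto simp: zz(3) xx(5) yy(5) vadd_in_QpX)
qed

end

section \<open>Reindexing operators\<close>

definition reindex :: "nat \<Rightarrow> ('x \<Rightarrow> 'x option) \<Rightarrow> ('x \<Rightarrow> qp) \<Rightarrow> ('x \<Rightarrow> qp)" where
  "reindex p h = restrict (\<lambda>\<xi> i. case h i of None \<Rightarrow> qp_zero p | Some j \<Rightarrow> \<xi> j) (QpX p)"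

lemma finite_partial_preimage:
  assumes "inj_on h (dom h)" "finite B"
  shows "finite {i. \<exists>k\<in>B. h i = Some k}"
proof -
  have "finite (h -` (Some ` B) \<inter> dom h)" using assms by (intro finite_vimage_IntI) auto
  moreover have "{i. \<exists>k\<in>B. h i = Some k} = h -` (Some ` B) \<inter> dom h" by auto
  ultimately show ?thesis by simp
qed

lemma inj_on_domI: "(\<And>i j k. h i = Some k \<Longrightarrow> h j = Some k \<Longrightarrow> i = j) \<Longrightarrow> inj_on h (dom h)"
  by (auto intro: inj_onI)

context padic_prime
begin

lemma reindex_apply: "\<xi> \<in> QpX p \<Longrightarrow> reindex p h \<xi> i = (case h i of None \<Rightarrow> qp_zero p | Some j \<Rightarrow> \<xi> j)"
  unfolding reindex_def by simp

lemma reindex_in_EP: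
  assumes "\<xi> \<in> QpX p" "\<xi> \<in> EP p P"
  shows "reindex p h \<xi> \<in> EP p {i. \<exists>k\<in>P. h i = Some k}"
  using assms Zp_subset_Qp unfolding EP_def by (auto simp: reindex_apply split: option.splits)

lemma reindex_in_QpX:
  assumes h: "inj_on h (dom h)" and \<xi>: "\<xi> \<in> QpX p"
  shows "reindex p h \<xi> \<in> QpX p"
  using reindex_in_EP[OF \<xi> QpX_in_EP_large_coords[OF \<xi>]]
    EP_subset_QpX[OF finite_partial_preimage[OF h finite_large_coords[OF \<xi>]]] by blast

lemma reindex_in_Bop1:
  fixes h :: "'x \<Rightarrow> 'x option"
  assumes h: "inj_on h (dom h)"
  shows "reindex p h \<in> Bop1 p"
proof (rule Bop1I)
  show "continuous_map (tau p) (tau p) (reindex p h)"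
  proof (rule continuous_map_tau_tau_locallyI)
    fix P and \<xi>0 :: "'x \<Rightarrow> qp" assume P: "finite P" and \<xi>0: "\<xi>0 \<in> EP p P"
    let ?Q = "{i. \<exists>k\<in>P. h i = Some k}"
    have "reindex p h ` EP p P \<subseteq> EP p ?Q"
      using reindex_in_EP EP_subset_QpX[OF P] by blast
    moreover have "continuous_map (subtopology (Qp_product p) (EP p P)) (Qp_top p) (\<lambda>\<xi>. reindex p h \<xi> k)" for k
    proof -
      have "continuous_map (subtopology (Qp_product p) (EP p P)) (Qp_top p)
          (\<lambda>\<xi>. case h k of None \<Rightarrow> qp_zero p | Some j \<Rightarrow> \<xi> j)"
        by (cases "h k") (auto intro: continuous_map_from_subtopology continuous_map_product_projection)
      thus ?thesis
        by (rule continuous_map_eq) (use EP_subset_QpX[OF P] in \<open>auto simp: reindex_apply\<close>)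
    qed
    ultimately show "\<exists>U Q. openin (EP_top p P) U \<and> \<xi>0 \<in> U \<and> finite Q \<and> reindex p h ` U \<subseteq> EP p Q \<and>
        (\<forall>k. continuous_map (subtopology (Qp_product p) U) (Qp_top p) (\<lambda>\<xi>. reindex p h \<xi> k))"
      using \<xi>0 finite_partial_preimage[OF h P] openin_EP_top_EP by blast
  qed (rule reindex_in_QpX[OF h])
  show "reindex p h (vadd p \<xi> \<eta>) = vadd p (reindex p h \<xi>) (reindex p h \<eta>)"
    if "\<xi> \<in> QpX p" "\<eta> \<in> QpX p" for \<xi> \<eta>
    using that vadd_in_QpX[OF that] by (auto simp: reindex_apply vadd_def split: option.splits)
  show "reindex p h (vsmult p a \<xi>) = vsmult p a (reindex p h \<xi>)" if "a \<in> Zp p" "\<xi> \<in> QpX p" for a \<xi>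
    using that vsmult_in_QpX[OF that] Zp_subset_Qp
    by (auto simp: reindex_apply vsmult_def intro!: ext split: option.splits)
  show "reindex p h \<xi> \<in> EP p {}" if "\<xi> \<in> EP p {}" for \<xi>
    using reindex_in_EP[OF EP_empty_subset_QpX[OF that] that] by simp
qed (simp add: reindex_def)

end

section \<open>Splitting the index set into countably many blocks\<close>

lemma exists_nat_times_decomposition:
  assumes "countable (UNIV :: 'x set)" "infinite (UNIV :: 'x set)"
  shows "\<exists>(\<beta> :: 'x \<Rightarrow> nat \<times> 'x) \<gamma>. (\<forall>i. \<gamma> (\<beta> i) = i) \<and> (\<forall>z. \<beta> (\<gamma> z) = z)"
proof -
  obtain e :: "'x \<Rightarrow> nat" where e: "bij e" using countableE_infinite[OF assms] by blast
  let ?e' = "inv_into UNIV e"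
  have e': "?e' (e x) = x" "e (?e' m) = m" for x m
    using e by (auto simp: bij_def surj_f_inv_f)
  define \<beta> where "\<beta> i = (fst (prod_decode (e i)), ?e' (snd (prod_decode (e i))))" for i
  define \<gamma> where "\<gamma> z = ?e' (prod_encode (fst z, e (snd z)))" for z
  have "\<gamma> (\<beta> i) = i" "\<beta> (\<gamma> z) = z" for i z by (simp_all add: \<beta>_def \<gamma>_def e')
  thus ?thesis by blast
qed

locale padic_blocks = padic_prime +
  fixes \<beta> :: "'x \<Rightarrow> nat \<times> 'x" and \<gamma> :: "nat \<times> 'x \<Rightarrow> 'x"
  assumes \<gamma>_\<beta> [simp]: "\<gamma> (\<beta> i) = i" and \<beta>_\<gamma> [simp]: "\<beta> (\<gamma> z) = z"
begin

lemma \<gamma>_fst_snd_\<beta> [simp]: "\<gamma> (fst (\<beta> i), snd (\<beta> i)) = i"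
  using \<gamma>_\<beta>[of i] by simp

lemma fst_snd_\<beta>_\<gamma> [simp]: "fst (\<beta> (\<gamma> (n, x))) = n" "snd (\<beta> (\<gamma> (n, x))) = x"
  using \<beta>_\<gamma>[of "(n, x)"] by auto

definition block :: "nat \<Rightarrow> ('x \<Rightarrow> qp) \<Rightarrow> ('x \<Rightarrow> qp)" where
  "block n \<xi> = (\<lambda>x. \<xi> (\<gamma> (n, x)))"

definition amplify :: "(('x \<Rightarrow> qp) \<Rightarrow> ('x \<Rightarrow> qp)) \<Rightarrow> ('x \<Rightarrow> qp) \<Rightarrow> ('x \<Rightarrow> qp)" where
  "amplify T = restrict (\<lambda>\<xi> i. T (block (fst (\<beta> i)) \<xi>) (snd (\<beta> i))) (QpX p)"

lemma amplify_apply: "\<xi> \<in> QpX p \<Longrightarrow> amplify T \<xi> i = T (block (fst (\<beta> i)) \<xi>) (snd (\<beta> i))"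
  unfolding amplify_def by simp

lemma block_amplify: "\<xi> \<in> QpX p \<Longrightarrow> block n (amplify T \<xi>) = T (block n \<xi>)"
  by (simp add: amplify_apply block_def)

lemma finite_block_preimage: "finite P \<Longrightarrow> finite {x. \<gamma> (n, x) \<in> P}"
  by (rule finite_subset[of _ "snd ` \<beta> ` P"]) (auto intro: image_eqI[of _ snd "\<beta> (\<gamma> (n, _))"])

lemma block_in_EP: "\<xi> \<in> EP p P \<Longrightarrow> block n \<xi> \<in> EP p {x. \<gamma> (n, x) \<in> P}"
  unfolding EP_def block_def by auto

lemma block_in_unit_ball:
  assumes "\<xi> \<in> EP p P" "n \<notin> fst ` \<beta> ` P"
  shows "block n \<xi> \<in> EP p {}"
proof -
  have "{x. \<gamma> (n, x) \<in> P} = {}" using assms(2) by (force intro: image_eqI[of _ fst "\<beta> (\<gamma> (n, _))"])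
  thus ?thesis using block_in_EP[OF assms(1), of n] by simp
qed

lemma block_in_QpX: "\<xi> \<in> QpX p \<Longrightarrow> block n \<xi> \<in> QpX p"
  using block_in_EP[OF QpX_in_EP_large_coords] EP_subset_QpX finite_block_preimage finite_large_coords
  by blast

lemma continuous_map_block: "continuous_map (subtopology (Qp_product p) U) (Qp_product p) (block n)"
  unfolding block_def continuous_map_componentwise_UNIV
  by (auto intro: continuous_map_from_subtopology continuous_map_product_projection)

text \<open>Only the finitely many blocks meeting \<open>P\<close> can leave the unit ball.\<close>

lemma amplify_in_EP:
  assumes T: "T \<in> Bop1 p" and P: "finite P" and \<xi>: "\<xi> \<in> EP p P"
    and Q: "\<And>n. n \<in> fst ` \<beta> ` P \<Longrightarrow> T (block n \<xi>) \<in> EP p (Q n)"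
  shows "amplify T \<xi> \<in> EP p (\<gamma> ` (SIGMA n:fst ` \<beta> ` P. Q n))" (is "_ \<in> EP p ?Q")
proof -
  have \<xi>X: "\<xi> \<in> QpX p" using EP_subset_QpX[OF P] \<xi> by blast
  have in_Qp: "T (block n \<xi>) y \<in> Qp p" for n y
    by (rule QpX_in_Qp[OF Bop1D(5)[OF T block_in_QpX[OF \<xi>X]]])
  have in_Zp: "T (block n \<xi>) y \<in> Zp p" if "\<gamma> (n, y) \<notin> ?Q" for n y
  proof (cases "n \<in> fst ` \<beta> ` P")
    case True
    hence "y \<notin> Q n" using that by blast
    thus ?thesis using Q[OF True] by (simp add: EP_def)
  next
    case False
    thus ?thesis using Bop1D(6)[OF T block_in_unit_ball[OF \<xi> False]] by (simp add: EP_def)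
  qed
  show ?thesis
    unfolding EP_def amplify_apply[OF \<xi>X] using in_Qp in_Zp[of "fst (\<beta> _)" "snd (\<beta> _)"] by simp
qed

lemma amplify_in_QpX:
  assumes T: "T \<in> Bop1 p" and \<xi>: "\<xi> \<in> QpX p"
  shows "amplify T \<xi> \<in> QpX p"
proof -
  let ?P = "large_coords p \<xi>" and ?Q = "\<lambda>n. large_coords p (T (block n \<xi>))"
  have "amplify T \<xi> \<in> EP p (\<gamma> ` (SIGMA n:fst ` \<beta> ` ?P. ?Q n))"
    by (rule amplify_in_EP[OF T finite_large_coords[OF \<xi>] QpX_in_EP_large_coords[OF \<xi>]])
       (rule QpX_in_EP_large_coords[OF Bop1D(5)[OF T block_in_QpX[OF \<xi>]]])
  moreover have "finite (\<gamma> ` (SIGMA n:fst ` \<beta> ` ?P. ?Q n))"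
    using finite_large_coords[OF \<xi>] finite_large_coords[OF Bop1D(5)[OF T block_in_QpX[OF \<xi>]]] by auto
  ultimately show ?thesis using EP_subset_QpX by blast
qed

lemma continuous_map_block_EP: "continuous_map (EP_top p P) (EP_top p {x. \<gamma> (n, x) \<in> P}) (block n)"
proof (rule continuous_map_into_subtopology[OF continuous_map_block])
  show "block n \<in> topspace (EP_top p P) \<rightarrow> EP p {x. \<gamma> (n, x) \<in> P}"
    unfolding topspace_EP_top using block_in_EP by blast
qed

lemma openin_amplify_nbhd:
  assumes T: "T \<in> Bop1 p" and P: "finite P" and Q: "\<And>n. finite (Q n)"
  shows "openin (EP_top p P) {\<xi> \<in> EP p P. \<forall>n\<in>fst ` \<beta> ` P. T (block n \<xi>) \<in> EP p (Q n)}"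
proof -
  let ?W = "\<lambda>n. {\<eta> \<in> EP p {x. \<gamma> (n, x) \<in> P}. T \<eta> \<in> EP p (Q n)}"
  have "openin (EP_top p P) {\<xi> \<in> topspace (EP_top p P). block n \<xi> \<in> ?W n}" for n
    by (rule openin_continuous_map_preimage[OF continuous_map_block_EP
          continuous_map_tau_EP_preimage(1)[OF Bop1D(2)[OF T] finite_block_preimage[OF P] Q]])
  hence "openin (EP_top p P)
      ((\<Inter>n\<in>fst ` \<beta> ` P. {\<xi> \<in> topspace (EP_top p P). block n \<xi> \<in> ?W n}) \<inter> topspace (EP_top p P))"
    by (rule openin_INT[OF finite_imageI[OF finite_imageI[OF P]]])
  moreover have "(\<Inter>n\<in>fst ` \<beta> ` P. {\<xi> \<in> EP p P. block n \<xi> \<in> ?W n}) \<inter> EP p P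
      = {\<xi> \<in> EP p P. \<forall>n\<in>fst ` \<beta> ` P. T (block n \<xi>) \<in> EP p (Q n)}"
    using block_in_EP[of _ P] by blast
  ultimately show ?thesis unfolding topspace_EP_top by simp
qed

lemma continuous_map_amplify_coordinate:
  assumes T: "T \<in> Bop1 p" and P: "finite P" and Q: "\<And>n. finite (Q n)"
  shows "continuous_map
     (subtopology (Qp_product p) {\<xi> \<in> EP p P. \<forall>n\<in>fst ` \<beta> ` P. T (block n \<xi>) \<in> EP p (Q n)})
     (Qp_top p) (\<lambda>\<xi>. T (block n \<xi>) y)"
proof -
  let ?U = "{\<xi> \<in> EP p P. \<forall>n\<in>fst ` \<beta> ` P. T (block n \<xi>) \<in> EP p (Q n)}"
  define Q' where "Q' = (if n \<in> fst ` \<beta> ` P then Q n else {})"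
  let ?W = "{\<eta> \<in> EP p {x. \<gamma> (n, x) \<in> P}. T \<eta> \<in> EP p Q'}"
  have "T (block n \<xi>) \<in> EP p Q'" if "\<xi> \<in> ?U" for \<xi>
    using that Bop1D(6)[OF T block_in_unit_ball] unfolding Q'_def by auto
  hence "block n ` ?U \<subseteq> ?W" using block_in_EP by auto
  hence "continuous_map (subtopology (Qp_product p) ?U) (subtopology (Qp_product p) ?W) (block n)"
    by (intro continuous_map_into_subtopology continuous_map_block) auto
  moreover have "continuous_map (subtopology (Qp_product p) ?W) (Qp_top p) (\<lambda>\<eta>. T \<eta> y)"
    using Q by (intro continuous_map_tau_EP_preimage(2)[OF Bop1D(2)[OF T] finite_block_preimage[OF P]])
       (simp add: Q'_def)
  ultimately have "continuous_map (subtopology (Qp_product p) ?U) (Qp_top p) ((\<lambda>\<eta>. T \<eta> y) \<circ> block n)"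
    by (rule continuous_map_compose)
  thus ?thesis by (simp add: o_def)
qed

lemma block_vadd: "block n (vadd p \<xi> \<eta>) = vadd p (block n \<xi>) (block n \<eta>)"
  unfolding block_def vadd_def by simp

lemma block_vsmult: "block n (vsmult p a \<xi>) = vsmult p a (block n \<xi>)"
  unfolding block_def vsmult_def by simp

lemma continuous_map_amplify:
  assumes T: "T \<in> Bop1 p"
  shows "continuous_map (tau p) (tau p) (amplify T)"
proof (rule continuous_map_tau_tau_locallyI)
  fix P and \<xi>0 :: "'x \<Rightarrow> qp" assume P: "finite P" and \<xi>0: "\<xi>0 \<in> EP p P"
  have \<xi>0X: "\<xi>0 \<in> QpX p" using EP_subset_QpX[OF P] \<xi>0 by blast
  define Q where "Q n = large_coords p (T (block n \<xi>0))" for n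
  have Q: "finite (Q n)" for n
    unfolding Q_def by (rule finite_large_coords[OF Bop1D(5)[OF T block_in_QpX[OF \<xi>0X]]])
  define U where "U = {\<xi> \<in> EP p P. \<forall>n\<in>fst ` \<beta> ` P. T (block n \<xi>) \<in> EP p (Q n)}"
  have "openin (EP_top p P) U"
    unfolding U_def by (rule openin_amplify_nbhd[OF T P, where Q = Q, OF Q])
  moreover have "\<xi>0 \<in> U"
    unfolding U_def Q_def
    using \<xi>0 QpX_in_EP_large_coords[OF Bop1D(5)[OF T block_in_QpX[OF \<xi>0X]]] by blast
  moreover have "amplify T ` U \<subseteq> EP p (\<gamma> ` (SIGMA n:fst ` \<beta> ` P. Q n))"
    using amplify_in_EP[OF T P] unfolding U_def by blast
  moreover have "finite (\<gamma> ` (SIGMA n:fst ` \<beta> ` P. Q n))" using P Q by auto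
  moreover have "continuous_map (subtopology (Qp_product p) U) (Qp_top p) (\<lambda>\<xi>. amplify T \<xi> k)" for k
    unfolding U_def
    using continuous_map_amplify_coordinate[OF T P, where Q = Q and n = "fst (\<beta> k)" and y = "snd (\<beta> k)", OF Q]
    by (rule continuous_map_eq) (use EP_subset_QpX[OF P] in \<open>auto simp: amplify_apply\<close>)
  ultimately show "\<exists>U Q. openin (EP_top p P) U \<and> \<xi>0 \<in> U \<and> finite Q \<and> amplify T ` U \<subseteq> EP p Q \<and>
      (\<forall>k. continuous_map (subtopology (Qp_product p) U) (Qp_top p) (\<lambda>\<xi>. amplify T \<xi> k))"
    by blast
qed (rule amplify_in_QpX[OF T])

lemma amplify_in_Bop1:
  assumes T: "T \<in> Bop1 p"
  shows "amplify T \<in> Bop1 p"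
proof (rule Bop1I)
  note t = Bop1D[OF T]
  show "continuous_map (tau p) (tau p) (amplify T)" by (rule continuous_map_amplify[OF T])
  show "amplify T (vadd p \<xi> \<eta>) = vadd p (amplify T \<xi>) (amplify T \<eta>)" if "\<xi> \<in> QpX p" "\<eta> \<in> QpX p" for \<xi> \<eta>
  proof
    fix i
    show "amplify T (vadd p \<xi> \<eta>) i = vadd p (amplify T \<xi>) (amplify T \<eta>) i"
      using that by (simp add: amplify_apply vadd_in_QpX block_vadd t(3) block_in_QpX)
        (simp add: vadd_def amplify_apply)
  qed
  show "amplify T (vsmult p a \<xi>) = vsmult p a (amplify T \<xi>)" if "a \<in> Zp p" "\<xi> \<in> QpX p" for a \<xi>
  proof
    fix i
    show "amplify T (vsmult p a \<xi>) i = vsmult p a (amplify T \<xi>) i"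
      using that by (simp add: amplify_apply vsmult_in_QpX block_vsmult t(4) block_in_QpX)
        (simp add: vsmult_def amplify_apply)
  qed
  show "amplify T \<xi> \<in> EP p {}" if "\<xi> \<in> EP p {}" for \<xi>
    using amplify_in_EP[OF T finite.emptyI that] by simp
qed (simp add: amplify_def)

abbreviation B1 :: "(('x \<Rightarrow> qp) \<Rightarrow> ('x \<Rightarrow> qp)) ring" where
  "B1 \<equiv> Bop1_ring p"

definition proj0 :: "('x \<Rightarrow> qp) \<Rightarrow> ('x \<Rightarrow> qp)" where
  "proj0 = reindex p (\<lambda>x. Some (\<gamma> (0, x)))"

definition incl0 :: "('x \<Rightarrow> qp) \<Rightarrow> ('x \<Rightarrow> qp)" where
  "incl0 = reindex p (\<lambda>i. if fst (\<beta> i) = 0 then Some (snd (\<beta> i)) else None)"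

definition shift_down :: "('x \<Rightarrow> qp) \<Rightarrow> ('x \<Rightarrow> qp)" where
  "shift_down = reindex p (\<lambda>i. Some (\<gamma> (Suc (fst (\<beta> i)), snd (\<beta> i))))"

definition shift_up :: "('x \<Rightarrow> qp) \<Rightarrow> ('x \<Rightarrow> qp)" where
  "shift_up = reindex p (\<lambda>i. case fst (\<beta> i) of 0 \<Rightarrow> None | Suc n \<Rightarrow> Some (\<gamma> (n, snd (\<beta> i))))"

lemma \<beta>_eqD: "fst (\<beta> i) = fst (\<beta> j) \<Longrightarrow> snd (\<beta> i) = snd (\<beta> j) \<Longrightarrow> i = j"
  by (metis \<gamma>_fst_snd_\<beta>)

lemma sum_ring_ops_in_Bop1: "proj0 \<in> Bop1 p" "incl0 \<in> Bop1 p" "shift_down \<in> Bop1 p" "shift_up \<in> Bop1 p"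
  unfolding proj0_def incl0_def shift_down_def shift_up_def
  by (intro reindex_in_Bop1 inj_on_domI;
      auto simp: \<beta>_eqD dest: arg_cong[where f = \<beta>] split: if_splits nat.splits)+

lemma proj0_apply: "\<xi> \<in> QpX p \<Longrightarrow> proj0 \<xi> = block 0 \<xi>"
  unfolding proj0_def block_def by (auto simp: reindex_apply)

lemma block_shift_down: "\<xi> \<in> QpX p \<Longrightarrow> block n (shift_down \<xi>) = block (Suc n) \<xi>"
  unfolding shift_down_def block_def by (auto simp: reindex_apply)

lemma incl0_apply:
  "\<xi> \<in> QpX p \<Longrightarrow> incl0 \<xi> i = (if fst (\<beta> i) = 0 then \<xi> (snd (\<beta> i)) else qp_zero p)"
  unfolding incl0_def by (simp add: reindex_apply)

lemma shift_up_apply: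
  "\<xi> \<in> QpX p \<Longrightarrow> shift_up \<xi> i = (case fst (\<beta> i) of 0 \<Rightarrow> qp_zero p | Suc n \<Rightarrow> \<xi> (\<gamma> (n, snd (\<beta> i))))"
  unfolding shift_up_def by (simp add: reindex_apply split: nat.split)

lemma proj0_incl0: "proj0 \<otimes>\<^bsub>B1\<^esub> incl0 = \<one>\<^bsub>B1\<^esub>"
  unfolding mult_Bop1_ring one_Bop1_ring
proof (rule extensionalityI)
  fix \<xi> :: "'x \<Rightarrow> qp" assume "\<xi> \<in> QpX p"
  moreover from this have "incl0 \<xi> \<in> QpX p" using Bop1D(5)[OF sum_ring_ops_in_Bop1(2)] by blast
  ultimately show "restrict (proj0 \<circ> incl0) (QpX p) \<xi> = restrict id (QpX p) \<xi>"
    by (auto simp: proj0_apply block_def incl0_apply)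
qed auto

lemma shift_down_up: "shift_down \<otimes>\<^bsub>B1\<^esub> shift_up = \<one>\<^bsub>B1\<^esub>"
  unfolding mult_Bop1_ring one_Bop1_ring
proof (rule extensionalityI)
  fix \<xi> :: "'x \<Rightarrow> qp" assume \<xi>: "\<xi> \<in> QpX p"
  moreover from this have "shift_up \<xi> \<in> QpX p" using Bop1D(5)[OF sum_ring_ops_in_Bop1(4)] by blast
  ultimately have "shift_down (shift_up \<xi>) i = \<xi> i" for i
    using block_shift_down[of "shift_up \<xi>" "fst (\<beta> i)"]
    by (auto simp: block_def shift_up_apply dest: fun_cong[where x = "snd (\<beta> i)"])
  thus "restrict (shift_down \<circ> shift_up) (QpX p) \<xi> = restrict id (QpX p) \<xi>" using \<xi> by auto
qed auto

lemma block_decomposition: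
  "(incl0 \<otimes>\<^bsub>B1\<^esub> proj0) \<oplus>\<^bsub>B1\<^esub> (shift_up \<otimes>\<^bsub>B1\<^esub> shift_down) = \<one>\<^bsub>B1\<^esub>"
  unfolding mult_Bop1_ring one_Bop1_ring add_Bop1_ring
proof (rule extensionalityI)
  fix \<xi> :: "'x \<Rightarrow> qp" assume \<xi>: "\<xi> \<in> QpX p"
  have X: "proj0 \<xi> \<in> QpX p" "shift_down \<xi> \<in> QpX p"
    using \<xi> Bop1D(5)[OF sum_ring_ops_in_Bop1(1)] Bop1D(5)[OF sum_ring_ops_in_Bop1(3)] by blast+
  have "vadd p (incl0 (proj0 \<xi>)) (shift_up (shift_down \<xi>)) i = \<xi> i" for i
  proof (cases "fst (\<beta> i)")
    case 0
    hence "\<gamma> (0, snd (\<beta> i)) = i" using \<gamma>_fst_snd_\<beta>[of i] by simp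
    hence "incl0 (proj0 \<xi>) i = \<xi> i" using X(1) 0 by (simp add: incl0_apply proj0_apply[OF \<xi>] block_def)
    moreover have "shift_up (shift_down \<xi>) i = qp_zero p" using X(2) 0 by (simp add: shift_up_apply)
    ultimately show ?thesis using QpX_in_Qp[OF \<xi>] by (simp add: vadd_def)
  next
    case (Suc n)
    hence "\<gamma> (Suc n, snd (\<beta> i)) = i" using \<gamma>_fst_snd_\<beta>[of i] by simp
    moreover have "shift_down \<xi> (\<gamma> (n, y)) = \<xi> (\<gamma> (Suc n, y))" for y
      using fun_cong[OF block_shift_down[OF \<xi>, of n], of y] by (simp add: block_def)
    ultimately have "shift_up (shift_down \<xi>) i = \<xi> i" using X(2) Suc by (simp add: shift_up_apply)
    moreover have "incl0 (proj0 \<xi>) i = qp_zero p" using X(1) Suc by (simp add: incl0_apply)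
    ultimately show ?thesis using QpX_in_Qp[OF \<xi>] by (simp add: vadd_def)
  qed
  thus "restrict (\<lambda>\<xi>. vadd p (restrict (incl0 \<circ> proj0) (QpX p) \<xi>) (restrict (shift_up \<circ> shift_down) (QpX p) \<xi>))
      (QpX p) \<xi> = restrict id (QpX p) \<xi>"
    using \<xi> by auto
qed auto

lemma amplify_ring_hom: "amplify \<in> ring_hom B1 B1"
proof (rule ring_hom_memI)
  show "amplify T \<in> carrier B1" if "T \<in> carrier B1" for T
    using amplify_in_Bop1 that by simp
  fix S T assume "S \<in> carrier B1" "T \<in> carrier B1"
  hence S: "S \<in> Bop1 p" and T: "T \<in> Bop1 p" by simp_all
  show "amplify (S \<otimes>\<^bsub>B1\<^esub> T) = amplify S \<otimes>\<^bsub>B1\<^esub> amplify T"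
    unfolding mult_Bop1_ring
  proof (rule extensionalityI)
    fix \<xi> :: "'x \<Rightarrow> qp" assume \<xi>: "\<xi> \<in> QpX p"
    have "amplify T \<xi> \<in> QpX p" by (rule amplify_in_QpX[OF T \<xi>])
    thus "amplify (restrict (S \<circ> T) (QpX p)) \<xi> = restrict (amplify S \<circ> amplify T) (QpX p) \<xi>"
      using \<xi> by (auto simp: amplify_apply block_amplify block_in_QpX)
  qed (simp_all add: amplify_def)
  show "amplify (S \<oplus>\<^bsub>B1\<^esub> T) = amplify S \<oplus>\<^bsub>B1\<^esub> amplify T"
    unfolding add_Bop1_ring
  proof (rule extensionalityI)
    fix \<xi> :: "'x \<Rightarrow> qp" assume \<xi>: "\<xi> \<in> QpX p"
    thus "amplify (restrict (\<lambda>\<xi>. vadd p (S \<xi>) (T \<xi>)) (QpX p)) \<xi>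
        = restrict (\<lambda>\<xi>. vadd p (amplify S \<xi>) (amplify T \<xi>)) (QpX p) \<xi>"
      by (auto simp: amplify_apply block_in_QpX vadd_def)
  qed (simp_all add: amplify_def)
next
  show "amplify \<one>\<^bsub>B1\<^esub> = \<one>\<^bsub>B1\<^esub>"
    unfolding one_Bop1_ring
  proof (rule extensionalityI)
    fix \<xi> :: "'x \<Rightarrow> qp" assume \<xi>: "\<xi> \<in> QpX p"
    thus "amplify (restrict id (QpX p)) \<xi> = restrict id (QpX p) \<xi>"
      by (simp add: fun_eq_iff amplify_apply block_in_QpX) (simp add: block_def)
  qed (simp_all add: amplify_def)
qed

text \<open>Block \<open>0\<close> carries \<open>T\<close> and the shifted remaining blocks carry \<open>T\<^sup>\<infinity>\<close>.\<close>

lemma boxplus_amplify: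
  assumes T: "T \<in> Bop1 p"
  shows "boxplus B1 proj0 incl0 shift_down shift_up T (amplify T) = amplify T"
  unfolding boxplus_def mult_Bop1_ring add_Bop1_ring
proof (rule extensionalityI)
  fix \<xi> :: "'x \<Rightarrow> qp" assume \<xi>: "\<xi> \<in> QpX p"
  have X: "proj0 \<xi> \<in> QpX p" "shift_down \<xi> \<in> QpX p"
    using \<xi> Bop1D(5)[OF sum_ring_ops_in_Bop1(1)] Bop1D(5)[OF sum_ring_ops_in_Bop1(3)] by blast+
  have TX: "T (proj0 \<xi>) \<in> QpX p" "amplify T (shift_down \<xi>) \<in> QpX p"
    using Bop1D(5)[OF T X(1)] amplify_in_QpX[OF T X(2)] by blast+
  have "vadd p (incl0 (T (proj0 \<xi>))) (shift_up (amplify T (shift_down \<xi>))) i = amplify T \<xi> i" for i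
  proof (cases "fst (\<beta> i)")
    case 0
    hence "incl0 (T (proj0 \<xi>)) i = amplify T \<xi> i"
      using TX(1) \<xi> by (simp add: incl0_apply proj0_apply amplify_apply)
    moreover have "shift_up (amplify T (shift_down \<xi>)) i = qp_zero p" using TX(2) 0 by (simp add: shift_up_apply)
    ultimately show ?thesis
      using QpX_in_Qp[OF amplify_in_QpX[OF T \<xi>]] by (simp add: vadd_def)
  next
    case (Suc n)
    hence "shift_up (amplify T (shift_down \<xi>)) i = amplify T \<xi> i"
      using TX(2) \<xi> X(2) by (simp add: shift_up_apply amplify_apply block_shift_down)
    moreover have "incl0 (T (proj0 \<xi>)) i = qp_zero p" using TX(1) Suc by (simp add: incl0_apply)
    ultimately show ?thesis
      using QpX_in_Qp[OF amplify_in_QpX[OF T \<xi>]] by (simp add: vadd_def)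
  qed
  thus "restrict (\<lambda>\<xi>. vadd p (restrict (restrict (incl0 \<circ> T) (QpX p) \<circ> proj0) (QpX p) \<xi>)
        (restrict (restrict (shift_up \<circ> amplify T) (QpX p) \<circ> shift_down) (QpX p) \<xi>)) (QpX p) \<xi>
      = amplify T \<xi>"
    using \<xi> X by auto
qed (simp_all add: amplify_def)

theorem infinite_sum_ring_B1: "infinite_sum_ring B1"
  unfolding infinite_sum_ring_def sum_ring_data_def
  using ring_Bop1_ring sum_ring_ops_in_Bop1 proj0_incl0 shift_down_up block_decomposition
    amplify_ring_hom boxplus_amplify
  by (intro conjI exI[of _ proj0] exI[of _ incl0] exI[of _ shift_down] exI[of _ shift_up] exI[of _ amplify]) auto

end

section \<open>Sum rings\<close>

locale sum_ring_elems = ring +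
  fixes a0 b0 a1 b1
  assumes sum_ring_data: "sum_ring_data R a0 b0 a1 b1"
begin

lemma sum_ring_elems_closed [simp]:
  "a0 \<in> carrier R" "b0 \<in> carrier R" "a1 \<in> carrier R" "b1 \<in> carrier R"
  using sum_ring_data unfolding sum_ring_data_def by auto

lemma a0_b0: "a0 \<otimes> b0 = \<one>" and a1_b1: "a1 \<otimes> b1 = \<one>" and b0_a0_add_b1_a1: "b0 \<otimes> a0 \<oplus> b1 \<otimes> a1 = \<one>"
  using sum_ring_data unfolding sum_ring_data_def by auto

lemma add_self_eq_zero: "x \<in> carrier R \<Longrightarrow> x = x \<oplus> x \<Longrightarrow> x = \<zero>"
  by (metis add.l_cancel_one' zero_closed)

lemma a0_b1: "a0 \<otimes> b1 = \<zero>"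
proof -
  have "a0 \<otimes> b1 = a0 \<otimes> (b0 \<otimes> a0 \<oplus> b1 \<otimes> a1) \<otimes> b1" using b0_a0_add_b1_a1 by simp
  also have "\<dots> = (a0 \<otimes> b0) \<otimes> (a0 \<otimes> b1) \<oplus> (a0 \<otimes> b1) \<otimes> (a1 \<otimes> b1)"
    by (simp add: r_distr l_distr m_assoc)
  also have "\<dots> = a0 \<otimes> b1 \<oplus> a0 \<otimes> b1" by (simp add: a0_b0 a1_b1)
  finally show ?thesis by (rule add_self_eq_zero[rotated]) simp
qed

lemma a1_b0: "a1 \<otimes> b0 = \<zero>"
proof -
  have "a1 \<otimes> b0 = a1 \<otimes> (b0 \<otimes> a0 \<oplus> b1 \<otimes> a1) \<otimes> b0" using b0_a0_add_b1_a1 by simp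
  also have "\<dots> = (a1 \<otimes> b0) \<otimes> (a0 \<otimes> b0) \<oplus> (a1 \<otimes> b1) \<otimes> (a1 \<otimes> b0)"
    by (simp add: r_distr l_distr m_assoc)
  also have "\<dots> = a1 \<otimes> b0 \<oplus> a1 \<otimes> b0" by (simp add: a0_b0 a1_b1)
  finally show ?thesis by (rule add_self_eq_zero[rotated]) simp
qed

lemma sum_ring_cancel:
  "x \<in> carrier R \<Longrightarrow> a0 \<otimes> (b0 \<otimes> x) = x" "x \<in> carrier R \<Longrightarrow> a1 \<otimes> (b1 \<otimes> x) = x"
  "x \<in> carrier R \<Longrightarrow> a0 \<otimes> (b1 \<otimes> x) = \<zero>" "x \<in> carrier R \<Longrightarrow> a1 \<otimes> (b0 \<otimes> x) = \<zero>"
  by (simp_all add: m_assoc[symmetric] a0_b0 a1_b1 a0_b1 a1_b0)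

lemmas sum_ring_simps = a0_b0 a1_b1 a0_b1 a1_b0 sum_ring_cancel

text \<open>Iterating \<open>R \<cong> R \<oplus> R\<close> gives \<open>R \<cong> R\<^sup>n\<close>: \<open>s i\<close> and \<open>t i\<close> are the inclusion of and projection
  onto the \<open>i\<close>-th summand.\<close>

lemma matrix_units_exist:
  "\<exists>s t. (\<forall>i. s i \<in> carrier R \<and> t i \<in> carrier R) \<and>
     (\<forall>i<Suc m. \<forall>j<Suc m. t i \<otimes> s j = (if i = j then \<one> else \<zero>)) \<and> (\<Oplus>i\<in>{..<Suc m}. s i \<otimes> t i) = \<one>"
proof (induction m)
  case 0
  show ?case by (rule exI[of _ "\<lambda>_. \<one>"], rule exI[of _ "\<lambda>_. \<one>"]) (auto simp: lessThan_Suc)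
next
  case (Suc m)
  then obtain s t where st: "\<forall>i. s i \<in> carrier R \<and> t i \<in> carrier R"
    "\<forall>i<Suc m. \<forall>j<Suc m. t i \<otimes> s j = (if i = j then \<one> else \<zero>)" "(\<Oplus>i\<in>{..<Suc m}. s i \<otimes> t i) = \<one>"
    by blast
  have [simp]: "s i \<in> carrier R" "t i \<in> carrier R" for i using st(1) by auto
  define s' where "s' i = (case i of 0 \<Rightarrow> b0 | Suc k \<Rightarrow> b1 \<otimes> s k)" for i
  define t' where "t' i = (case i of 0 \<Rightarrow> a0 | Suc k \<Rightarrow> t k \<otimes> a1)" for i
  have c': "s' i \<in> carrier R" "t' i \<in> carrier R" for i unfolding s'_def t'_def by (auto split: nat.splits)
  have orth: "t' i \<otimes> s' j = (if i = j then \<one> else \<zero>)" if "i < Suc (Suc m)" "j < Suc (Suc m)" for i j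
  proof (cases i; cases j)
    fix i' j' assume i: "i = Suc i'" and j: "j = Suc j'"
    have "t' i \<otimes> s' j = t i' \<otimes> (a1 \<otimes> (b1 \<otimes> s j'))" unfolding i j s'_def t'_def by (simp add: m_assoc)
    also have "\<dots> = t i' \<otimes> s j'" by (simp add: sum_ring_simps)
    finally show ?thesis using st(2) that i j by auto
  qed (auto simp: s'_def t'_def m_assoc sum_ring_simps)
  have "(\<Oplus>i\<in>{..<Suc (Suc m)}. s' i \<otimes> t' i) = (\<Oplus>i\<in>{..Suc m}. s' i \<otimes> t' i)"
    by (simp add: lessThan_Suc_atMost)
  also have "\<dots> = (\<Oplus>i\<in>{..m}. s' (Suc i) \<otimes> t' (Suc i)) \<oplus> s' 0 \<otimes> t' 0"
    by (rule finsum_Suc2) (use c' in auto)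
  also have "(\<Oplus>i\<in>{..m}. s' (Suc i) \<otimes> t' (Suc i)) = (\<Oplus>i\<in>{..<Suc m}. b1 \<otimes> (s i \<otimes> t i) \<otimes> a1)"
    unfolding lessThan_Suc_atMost[symmetric] by (rule finsum_cong') (auto simp: s'_def t'_def m_assoc)
  also have "\<dots> = b1 \<otimes> (\<Oplus>i\<in>{..<Suc m}. s i \<otimes> t i) \<otimes> a1"
    by (simp add: finsum_ldistr finsum_rdistr)
  also have "\<dots> = b1 \<otimes> a1" using st(3) by simp
  finally have "(\<Oplus>i\<in>{..<Suc (Suc m)}. s' i \<otimes> t' i) = \<one>"
    using b0_a0_add_b1_a1 by (simp add: s'_def t'_def a_comm)
  thus ?case using c' orth by blast
qed

text \<open>The algebra behind the Eilenberg swindle: if \<open>F\<close> is idempotent and \<open>F = E \<boxplus> F\<close>,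
  then \<open>[E] + [F] = [F]\<close>, witnessed by the elements below.\<close>

context
  fixes E F
  assumes EF [simp]: "E \<in> carrier R" "F \<in> carrier R"
    and F_idem: "F \<otimes> F = F" and F_eq: "b0 \<otimes> E \<otimes> a0 \<oplus> b1 \<otimes> F \<otimes> a1 = F"
begin

lemma a0_F: "a0 \<otimes> F = E \<otimes> a0"
proof -
  have "a0 \<otimes> F = a0 \<otimes> (b0 \<otimes> E \<otimes> a0 \<oplus> b1 \<otimes> F \<otimes> a1)" using F_eq by simp
  also have "\<dots> = E \<otimes> a0" by (simp add: r_distr m_assoc sum_ring_simps)
  finally show ?thesis .
qed

lemma F_b0: "F \<otimes> b0 = b0 \<otimes> E"
proof -
  have "F \<otimes> b0 = (b0 \<otimes> E \<otimes> a0 \<oplus> b1 \<otimes> F \<otimes> a1) \<otimes> b0" using F_eq by simp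
  also have "\<dots> = b0 \<otimes> E" by (simp add: l_distr m_assoc sum_ring_simps)
  finally show ?thesis .
qed

lemma a1_F: "a1 \<otimes> F = F \<otimes> a1"
proof -
  have "a1 \<otimes> F = a1 \<otimes> (b0 \<otimes> E \<otimes> a0 \<oplus> b1 \<otimes> F \<otimes> a1)" using F_eq by simp
  also have "\<dots> = F \<otimes> a1" by (simp add: r_distr m_assoc sum_ring_simps)
  finally show ?thesis .
qed

lemma F_b1: "F \<otimes> b1 = b1 \<otimes> F"
proof -
  have "F \<otimes> b1 = (b0 \<otimes> E \<otimes> a0 \<oplus> b1 \<otimes> F \<otimes> a1) \<otimes> b1" using F_eq by simp
  also have "\<dots> = b1 \<otimes> F" by (simp add: l_distr m_assoc sum_ring_simps)
  finally show ?thesis .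
qed

lemma swindle_assoc:
  "x \<in> carrier R \<Longrightarrow> a0 \<otimes> (F \<otimes> x) = E \<otimes> (a0 \<otimes> x)"
  "x \<in> carrier R \<Longrightarrow> F \<otimes> (b0 \<otimes> x) = b0 \<otimes> (E \<otimes> x)"
  "x \<in> carrier R \<Longrightarrow> a1 \<otimes> (F \<otimes> x) = F \<otimes> (a1 \<otimes> x)"
  "x \<in> carrier R \<Longrightarrow> F \<otimes> (b1 \<otimes> x) = b1 \<otimes> (F \<otimes> x)"
  "x \<in> carrier R \<Longrightarrow> F \<otimes> (F \<otimes> x) = F \<otimes> x"
  by (simp_all add: m_assoc[symmetric] a0_F F_b0 a1_F F_b1 F_idem)

lemmas swindle_simps = a0_F F_b0 a1_F F_b1 F_idem swindle_assoc

lemma swindle_right_inverse: "(F \<otimes> a1 \<oplus> (\<one> \<ominus> F)) \<otimes> (b1 \<otimes> F \<oplus> (\<one> \<ominus> F)) = \<one>"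
  by (simp add: ring_simprules sum_ring_simps swindle_simps)

lemma swindle_left_inverse:
  "(b1 \<otimes> F \<oplus> (\<one> \<ominus> F)) \<otimes> (F \<otimes> a1 \<oplus> (\<one> \<ominus> F)) \<oplus> b0 \<otimes> E \<otimes> a0 = \<one>"
  using F_eq by (simp add: ring_simprules sum_ring_simps swindle_simps)

lemma swindle_orthogonal_left:
  assumes "u \<in> carrier R" "u \<otimes> E = u"
  shows "u \<otimes> a0 \<otimes> (b1 \<otimes> F \<oplus> (\<one> \<ominus> F)) = \<zero>"
proof -
  have "u \<otimes> (E \<otimes> a0) = u \<otimes> a0" using assms by (simp add: m_assoc[symmetric])
  thus ?thesis using assms(1) by (simp add: ring_simprules sum_ring_simps swindle_simps)
qed

lemma swindle_orthogonal_right: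
  "v \<in> carrier R \<Longrightarrow> E \<otimes> v = v \<Longrightarrow> (F \<otimes> a1 \<oplus> (\<one> \<ominus> F)) \<otimes> (b0 \<otimes> v) = \<zero>"
  by (simp add: ring_simprules sum_ring_simps swindle_simps)

end

end

section \<open>Matrices over a ring with a system of matrix units\<close>

text \<open>Matrix units identify \<open>n \<times> n\<close> matrices over \<open>R\<close> with elements of \<open>R\<close>,
  via \<open>mat_to_elem\<close> and \<open>x \<mapsto> (t i \<otimes> x \<otimes> s j)\<^sub>i\<^sub>j\<close>.\<close>

locale matrix_units = ring +
  fixes n :: nat and s t :: "nat \<Rightarrow> 'a"
  assumes s_closed [simp]: "s i \<in> carrier R" and t_closed [simp]: "t i \<in> carrier R"
    and t_s: "i < n \<Longrightarrow> j < n \<Longrightarrow> t i \<otimes> s j = (if i = j then \<one> else \<zero>)"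
    and sum_s_t: "(\<Oplus>i\<in>{..<n}. s i \<otimes> t i) = \<one>"
begin

lemma t_mult_finsum:
  assumes "i < n" "\<And>l. l < n \<Longrightarrow> g l \<in> carrier R"
  shows "t i \<otimes> (\<Oplus>l\<in>{..<n}. s l \<otimes> g l) = g i"
proof -
  have "t i \<otimes> (\<Oplus>l\<in>{..<n}. s l \<otimes> g l) = (\<Oplus>l\<in>{..<n}. t i \<otimes> (s l \<otimes> g l))"
    using assms by (intro finsum_rdistr) auto
  also have "\<dots> = (\<Oplus>l\<in>{..<n}. if i = l then g l else \<zero>)"
    using assms by (intro finsum_cong') (auto simp: m_assoc[symmetric] t_s)
  also have "\<dots> = g i" using assms by (intro finsum_singleton) auto
  finally show ?thesis .
qed

lemma finsum_mult_s:
  assumes "j < n" "\<And>m. m < n \<Longrightarrow> g m \<in> carrier R"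
  shows "(\<Oplus>m\<in>{..<n}. g m \<otimes> t m) \<otimes> s j = g j"
proof -
  have "(\<Oplus>m\<in>{..<n}. g m \<otimes> t m) \<otimes> s j = (\<Oplus>m\<in>{..<n}. g m \<otimes> t m \<otimes> s j)"
    using assms by (intro finsum_ldistr) auto
  also have "\<dots> = (\<Oplus>m\<in>{..<n}. if j = m then g m else \<zero>)"
    using assms by (intro finsum_cong') (auto simp: m_assoc t_s)
  also have "\<dots> = g j" using assms by (intro finsum_singleton) auto
  finally show ?thesis .
qed

lemma t_mult_s:
  assumes "x \<in> carrier R" "y \<in> carrier R"
  shows "t l \<otimes> (x \<otimes> y) \<otimes> s m = (\<Oplus>k\<in>{..<n}. (t l \<otimes> x \<otimes> s k) \<otimes> (t k \<otimes> y \<otimes> s m))"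
proof -
  have "t l \<otimes> (x \<otimes> y) \<otimes> s m = (t l \<otimes> x) \<otimes> (\<Oplus>k\<in>{..<n}. s k \<otimes> t k) \<otimes> (y \<otimes> s m)"
    using assms by (simp add: sum_s_t m_assoc)
  also have "\<dots> = (\<Oplus>k\<in>{..<n}. (t l \<otimes> x) \<otimes> (s k \<otimes> t k)) \<otimes> (y \<otimes> s m)"
    using assms by (subst finsum_rdistr) auto
  also have "\<dots> = (\<Oplus>k\<in>{..<n}. (t l \<otimes> x) \<otimes> (s k \<otimes> t k) \<otimes> (y \<otimes> s m))"
    using assms by (subst finsum_ldistr) auto
  also have "\<dots> = (\<Oplus>k\<in>{..<n}. (t l \<otimes> x \<otimes> s k) \<otimes> (t k \<otimes> y \<otimes> s m))"
    using assms by (intro finsum_cong') (auto simp: m_assoc)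
  finally show ?thesis .
qed

definition mat_to_elem :: "(nat \<Rightarrow> nat \<Rightarrow> 'a) \<Rightarrow> 'a" where
  "mat_to_elem e = (\<Oplus>l\<in>{..<n}. s l \<otimes> (\<Oplus>m\<in>{..<n}. e l m \<otimes> t m))"

lemma mat_to_elem_closed: "e \<in> mat_carrier R n n \<Longrightarrow> mat_to_elem e \<in> carrier R"
  unfolding mat_to_elem_def mat_carrier_def by (auto intro!: finsum_closed)

lemma mat_to_elem_cong:
  assumes e: "e \<in> mat_carrier R n n" and eq: "\<And>l m. l < n \<Longrightarrow> m < n \<Longrightarrow> e' l m = e l m"
  shows "mat_to_elem e' = mat_to_elem e"
proof -
  have "(\<Oplus>m\<in>{..<n}. e' l m \<otimes> t m) = (\<Oplus>m\<in>{..<n}. e l m \<otimes> t m)" if "l < n" for l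
    using e eq that by (intro finsum_cong') (auto simp: mat_carrier_def)
  thus ?thesis
    unfolding mat_to_elem_def using e by (intro finsum_cong') (auto simp: mat_carrier_def intro!: finsum_closed)
qed

lemma t_mat_to_elem_s:
  assumes e: "e \<in> mat_carrier R n n" and "i < n" "j < n"
  shows "t i \<otimes> mat_to_elem e \<otimes> s j = e i j"
  using assms t_mult_finsum finsum_mult_s unfolding mat_to_elem_def mat_carrier_def
  by (simp add: finsum_closed Pi_iff)

lemma mat_to_elem_expansion:
  assumes "x \<in> carrier R"
  shows "mat_to_elem (\<lambda>l m. t l \<otimes> x \<otimes> s m) = x"
proof -
  have "x = (\<Oplus>l\<in>{..<n}. s l \<otimes> t l) \<otimes> (x \<otimes> (\<Oplus>m\<in>{..<n}. s m \<otimes> t m))"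
    using assms by (simp add: sum_s_t)
  also have "\<dots> = (\<Oplus>l\<in>{..<n}. s l \<otimes> (t l \<otimes> (x \<otimes> (\<Oplus>m\<in>{..<n}. s m \<otimes> t m))))"
    using assms by (subst finsum_ldistr) (auto intro!: finsum_cong' simp: m_assoc finsum_closed)
  also have "\<dots> = mat_to_elem (\<lambda>l m. t l \<otimes> x \<otimes> s m)"
    unfolding mat_to_elem_def using assms
    by (intro finsum_cong') (auto simp: finsum_rdistr m_assoc finsum_closed intro!: finsum_cong')
  finally show ?thesis by (rule sym)
qed

lemma mat_to_elem_idem:
  assumes e: "idempotent_mat R n e"
  shows "mat_to_elem e \<otimes> mat_to_elem e = mat_to_elem e"
proof -
  let ?E = "mat_to_elem e"
  have ec: "e \<in> mat_carrier R n n" using e unfolding idempotent_mat_def by simp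
  hence E: "?E \<in> carrier R" by (rule mat_to_elem_closed)
  have "t l \<otimes> (?E \<otimes> ?E) \<otimes> s m = e l m" if "l < n" "m < n" for l m
  proof -
    have "t l \<otimes> (?E \<otimes> ?E) \<otimes> s m = (\<Oplus>k\<in>{..<n}. (t l \<otimes> ?E \<otimes> s k) \<otimes> (t k \<otimes> ?E \<otimes> s m))"
      by (rule t_mult_s[OF E E])
    also have "\<dots> = (\<Oplus>k\<in>{..<n}. e l k \<otimes> e k m)"
      using that ec by (intro finsum_cong') (auto simp: t_mat_to_elem_s mat_carrier_def)
    also have "\<dots> = e l m" using e that unfolding idempotent_mat_def mat_eq_def mat_mult_def by simp
    finally show ?thesis .
  qed
  hence "mat_to_elem (\<lambda>l m. t l \<otimes> (?E \<otimes> ?E) \<otimes> s m) = ?E"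
    by (rule mat_to_elem_cong[OF ec])
  thus ?thesis using mat_to_elem_expansion[of "?E \<otimes> ?E"] E by simp
qed

end

section \<open>The Eilenberg swindle\<close>

lemma (in ring) finsum_lessThan_Suc_0: "f 0 \<in> carrier R \<Longrightarrow> (\<Oplus>l\<in>{..<Suc 0}. f l) = f 0"
  by (simp add: lessThan_Suc)

text \<open>In the application \<open>F\<close> is \<open>E\<^sup>\<infinity>\<close>; \<open>col\<close> and \<open>row\<close> witness \<open>e \<oplus> 1 \<sim> 1\<close>.\<close>

locale swindle = sum_ring_elems + matrix_units +
  fixes e F
  assumes e_idem: "idempotent_mat R n e" and F_closed [simp]: "F \<in> carrier R"
    and F_idem: "F \<otimes> F = F" and F_eq: "b0 \<otimes> mat_to_elem e \<otimes> a0 \<oplus> b1 \<otimes> F \<otimes> a1 = F"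
begin

abbreviation E :: 'a where "E \<equiv> mat_to_elem e"

definition col :: "nat \<Rightarrow> nat \<Rightarrow> 'a" where
  "col i j = (if i < n then t i \<otimes> E \<otimes> a0 else F \<otimes> a1 \<oplus> (\<one> \<ominus> F))"

definition row :: "nat \<Rightarrow> nat \<Rightarrow> 'a" where
  "row i j = (if j < n then b0 \<otimes> E \<otimes> s j else b1 \<otimes> F \<oplus> (\<one> \<ominus> F))"

lemma e_closed: "e \<in> mat_carrier R n n"
  using e_idem unfolding idempotent_mat_def by simp

lemma E_closed [simp]: "E \<in> carrier R"
  by (rule mat_to_elem_closed[OF e_closed])

lemma E_idem: "E \<otimes> E = E"
  by (rule mat_to_elem_idem[OF e_idem])

lemma col_row_closed [simp]: "col i j \<in> carrier R" "row i j \<in> carrier R"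
  unfolding col_def row_def by auto

lemmas swindle_EF =
  swindle_right_inverse[OF E_closed F_closed F_idem F_eq]
  swindle_left_inverse[OF E_closed F_closed F_idem F_eq]
  swindle_orthogonal_left[OF E_closed F_closed F_idem F_eq]
  swindle_orthogonal_right[OF E_closed F_closed F_idem F_eq]

lemma col_mult_row:
  assumes "i < n + 1" "j < n + 1"
  shows "col i 0 \<otimes> row 0 j = dsum_one R n e i j"
proof (cases "i < n"; cases "j < n")
  assume "i < n" "j < n"
  hence "col i 0 \<otimes> row 0 j = t i \<otimes> (E \<otimes> E) \<otimes> s j"
    unfolding col_def row_def by (simp add: m_assoc sum_ring_simps)
  thus ?thesis using \<open>i < n\<close> \<open>j < n\<close> by (simp add: E_idem t_mat_to_elem_s[OF e_closed] dsum_one_def)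
next
  assume "i < n" "\<not> j < n"
  have "t i \<otimes> E \<otimes> E = t i \<otimes> E" by (simp add: m_assoc E_idem)
  thus ?thesis using \<open>i < n\<close> \<open>\<not> j < n\<close> swindle_EF(3)[of "t i \<otimes> E"]
    by (simp add: col_def row_def dsum_one_def)
next
  assume "\<not> i < n" "j < n"
  have "E \<otimes> (E \<otimes> s j) = E \<otimes> s j" by (simp add: m_assoc[symmetric] E_idem)
  thus ?thesis using \<open>\<not> i < n\<close> \<open>j < n\<close> swindle_EF(4)[of "E \<otimes> s j"]
    by (simp add: col_def row_def dsum_one_def m_assoc)
next
  assume "\<not> i < n" "\<not> j < n"
  thus ?thesis using assms swindle_EF(1) by (simp add: col_def row_def dsum_one_def)
qed

lemma row_mult_col: "(\<Oplus>l\<in>{..<n + 1}. row 0 l \<otimes> col l 0) = \<one>"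
proof -
  have "(\<Oplus>l\<in>{..<n + 1}. row 0 l \<otimes> col l 0)
      = (b1 \<otimes> F \<oplus> (\<one> \<ominus> F)) \<otimes> (F \<otimes> a1 \<oplus> (\<one> \<ominus> F)) \<oplus> (\<Oplus>l\<in>{..<n}. row 0 l \<otimes> col l 0)"
    unfolding Suc_eq_plus1[symmetric] lessThan_Suc by (subst finsum_insert) (auto simp: col_def row_def)
  also have "(\<Oplus>l\<in>{..<n}. row 0 l \<otimes> col l 0) = (\<Oplus>l\<in>{..<n}. b0 \<otimes> E \<otimes> (s l \<otimes> t l) \<otimes> (E \<otimes> a0))"
    by (intro finsum_cong') (auto simp: col_def row_def m_assoc)
  also have "\<dots> = b0 \<otimes> E \<otimes> (\<Oplus>l\<in>{..<n}. s l \<otimes> t l) \<otimes> (E \<otimes> a0)"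
    by (simp add: finsum_ldistr finsum_rdistr)
  also have "\<dots> = b0 \<otimes> (E \<otimes> E) \<otimes> a0" by (simp add: sum_s_t m_assoc)
  also have "\<dots> = b0 \<otimes> E \<otimes> a0" by (simp only: E_idem)
  finally show ?thesis using swindle_EF(2) by simp
qed

lemma mvn_equiv_dsum_one: "mvn_equiv R (n + 1) 1 (dsum_one R n e) (identity_mat R)"
proof -
  have "mat_eq (n + 1) (n + 1) (mat_mult R 1 col row) (dsum_one R n e)"
    unfolding mat_eq_def mat_mult_def
    using col_mult_row finsum_lessThan_Suc_0[of "\<lambda>l. col _ l \<otimes> row l _"] by simp
  moreover have "mat_eq 1 1 (mat_mult R (n + 1) row col) (identity_mat R)"
    using row_mult_col unfolding mat_eq_def mat_mult_def identity_mat_def by simp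
  ultimately show ?thesis
    unfolding mvn_equiv_def mat_carrier_def by (intro exI[of _ col] exI[of _ row]) simp
qed

end

lemma (in sum_ring_elems) K0_trivial_if_amplification:
  assumes \<phi>: "\<phi> \<in> ring_hom R R" and box: "\<And>x. x \<in> carrier R \<Longrightarrow> boxplus R a0 b0 a1 b1 x (\<phi> x) = \<phi> x"
  shows "K0_trivial R"
  unfolding K0_trivial_def
proof (intro allI impI)
  fix n e assume e: "idempotent_mat R n e"
  show "\<exists>k. mvn_equiv R (n + k) k (dsum_one R n e) (identity_mat R)"
  proof (cases n)
    case 0
    show ?thesis unfolding 0 mvn_equiv_def mat_carrier_def mat_eq_def by (rule exI[of _ 0]) auto
  next
    case (Suc m)
    then obtain s t where "matrix_units R n s t"
      using matrix_units_exist[of m] unfolding matrix_units_def matrix_units_axioms_def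
      by (auto intro: ring_axioms)
    then interpret matrix_units R n s t .
    let ?E = "mat_to_elem e"
    have E: "?E \<in> carrier R"
      using e mat_to_elem_closed unfolding idempotent_mat_def by blast
    have "\<phi> ?E \<in> carrier R" "\<phi> ?E \<otimes> \<phi> ?E = \<phi> ?E"
      using E mat_to_elem_idem[OF e] ring_hom_closed[OF \<phi>] ring_hom_mult[OF \<phi>] by metis+
    moreover have "b0 \<otimes> ?E \<otimes> a0 \<oplus> b1 \<otimes> \<phi> ?E \<otimes> a1 = \<phi> ?E"
      using box[OF E] unfolding boxplus_def .
    ultimately interpret swindle R a0 b0 a1 b1 n s t e "\<phi> ?E"
      using e by unfold_locales
    show ?thesis using mvn_equiv_dsum_one by blast
  qed
qed

lemma K0_trivial_if_infinite_sum_ring: "infinite_sum_ring R \<Longrightarrow> K0_trivial R"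
  unfolding infinite_sum_ring_def
  by (metis sum_ring_elems.K0_trivial_if_amplification sum_ring_elems.intro sum_ring_elems_axioms.intro)

theorem lemma3p11:
  fixes p :: nat
  assumes "prime p"
    and "countable (UNIV :: 'x set)"
    and "infinite (UNIV :: 'x set)"
  shows "infinite_sum_ring (Bop1_ring p :: (('x \<Rightarrow> qp) \<Rightarrow> ('x \<Rightarrow> qp)) ring)
         \<and> K0_trivial (Bop1_ring p :: (('x \<Rightarrow> qp) \<Rightarrow> ('x \<Rightarrow> qp)) ring)"
proof -
  obtain \<beta> :: "'x \<Rightarrow> nat \<times> 'x" and \<gamma> where "\<And>i. \<gamma> (\<beta> i) = i" "\<And>z. \<beta> (\<gamma> z) = z"
    using exists_nat_times_decomposition[OF assms(2,3)] by blast
  then interpret padic_blocks p \<beta> \<gamma>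
    by (intro padic_blocks.intro padic_prime.intro padic_blocks_axioms.intro assms(1))
  have "infinite_sum_ring B1" by (rule infinite_sum_ring_B1)
  thus ?thesis using K0_trivial_if_infinite_sum_ring by blast
qed

end
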